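(* In the supersample setting described in the context, let $\mathcal L$ be the domain of $L_i^+$ and, for each $i$, consider the random process $\{\xi^i(\ell^+)\}_{\ell^+\in\mathcal L}$ with $\xi^i(\ell^+)=\varepsilon_i\ell^+$, where $\varepsilon_i=(-1)^{1-U_i}$. For each $i\in\{1,\dots,n\}$ assume $\{L^+_{i,k}\}_{k=k_0}^\infty$ is a stochastic chain of the pair $(\{\xi^i(\ell^+)\}_{\ell^+\in\mathcal L},L^+_i)$. Then \[ \mathrm{Err}\leq \frac{2}{n}\sum_{i=1}^n\sum_{k=k_0+1}^\infty\sqrt{2\,\mathbb E\!\left[|L^+_{i,k}-L^+_{i,k-1}|^2\right]I( L^+_{i,k};U_i)}, \] where the expectation is over $(L^+_{i,k},L^+_{i,k-1})$.
   Context: Let $\mathcal Z=\mathcal X\times\mathcal Y$ and let $\mu$ be a distribution on $\mathcal Z$. A (possibly randomized) learning algorithm $\mathcal A$ maps a training sample in $\mathcal Z^n$ to a hypothesis $W\in\mathcal W$, and $\ell:\mathcal W\times\mathcal Z\to[0,\infty)$ is a loss (not assumed discrete or bounded). For $S=(Z_1,\dots,Z_n)\sim\mu^{n}$ and $W\sim P_{W|S}$, let $L_\mu=\mathbb E_W\mathbb E_{Z'\sim\mu}[\ell(W,Z')]$ (with $Z'$ independent of $(S,W)$), $L_n=\mathbb E_{W,S}[\frac1n\sum_i\ell(W,Z_i)]$, $\mathrm{Err}=L_\mu-L_n$. Supersample: $\widetilde Z=(\widetilde Z_{i,j})_{i\in\{1,\dots,n\},j\in\{0,1\}}$ with i.i.d.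 entries of law $\mu$; $U=(U_1,\dots,U_n)$ uniform on $\{0,1\}^n$, independent of $\widetilde Z$; $W=\mathcal A(\widetilde Z_U)$ with $\widetilde Z_U=(\widetilde Z_{1,U_1},\dots,\widetilde Z_{n,U_n})$; $L_i^+=\ell(W,\widetilde Z_{i,0})$. Stochastic chain: for a random process $\{X_t\}_{t\in\mathcal T}$ and a random variable $T$ in $\mathcal T$, a sequence of $\mathcal T$-valued random variables $\{T_k\}_{k=k_0}^\infty$ is a stochastic chain of $(\{X_t\},T)$ if (1) $\lim_{k\to\infty}\mathbb E[X_{T_k}]=\mathbb E[X_T]$; (2) $\mathbb E[X_{T_{k_0}}]=0$; (3) $\{X_t\}_{t\in\mathcal T}-T-T_k-T_{k-1}$ is a Markov chain for every $k>k_0$. Mutual information is in nats. *)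

theory Defs
  imports "HOL-Probability.Probability"
begin

definition cond_indep ::
  "'a measure \<Rightarrow> 'b measure \<Rightarrow> ('a \<Rightarrow> 'b) \<Rightarrow> 'c measure \<Rightarrow> ('a \<Rightarrow> 'c)
     \<Rightarrow> 'd measure \<Rightarrow> ('a \<Rightarrow> 'd) \<Rightarrow> bool" where
  "cond_indep M SX X SY Y SZ Z \<longleftrightarrow>
     X \<in> M \<rightarrow>\<^sub>M SX \<and> Y \<in> M \<rightarrow>\<^sub>M SY \<and> Z \<in> M \<rightarrow>\<^sub>M SZ \<and>
     (\<forall>A\<in>sets SX. \<forall>B\<in>sets SY. AE \<omega> in M.
        real_cond_exp M (vimage_algebra (space M) Z SZ)
          (\<lambda>w. indicator A (X w) * indicator B (Y w)) \<omega> =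
        real_cond_exp M (vimage_algebra (space M) Z SZ) (\<lambda>w. indicator A (X w)) \<omega> *
        real_cond_exp M (vimage_algebra (space M) Z SZ) (\<lambda>w. indicator B (Y w)) \<omega>)"

text \<open>Markov chain X - Y - Z - V: X is independent of Z given Y, and
(X,Y) is independent of V given Z (i.e. p(x,y,z,v) = p(x,y) p(z|y) p(v|z)).\<close>
definition markov_chain4 ::
  "'a measure \<Rightarrow> 'b measure \<Rightarrow> ('a \<Rightarrow> 'b) \<Rightarrow> 'c measure \<Rightarrow> ('a \<Rightarrow> 'c)
     \<Rightarrow> 'd measure \<Rightarrow> ('a \<Rightarrow> 'd) \<Rightarrow> 'e measure \<Rightarrow> ('a \<Rightarrow> 'e) \<Rightarrow> bool" where
  "markov_chain4 M SX X SY Y SZ Z SV V \<longleftrightarrow>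
     cond_indep M SX X SZ Z SY Y \<and>
     cond_indep M (SX \<Otimes>\<^sub>M SY) (\<lambda>w. (X w, Y w)) SV V SZ Z"

text \<open>The process is viewed as the random element t \<mapsto> X t \<omega> of the product space.\<close>
definition stochastic_chain ::
  "'a measure \<Rightarrow> 't measure \<Rightarrow> ('t \<Rightarrow> 'a \<Rightarrow> real) \<Rightarrow> ('a \<Rightarrow> 't)
     \<Rightarrow> (nat \<Rightarrow> 'a \<Rightarrow> 't) \<Rightarrow> nat \<Rightarrow> bool" where
  "stochastic_chain M TS X T Tk k0 \<longleftrightarrow>
     T \<in> M \<rightarrow>\<^sub>M TS \<and> (\<forall>k\<ge>k0. Tk k \<in> M \<rightarrow>\<^sub>M TS) \<and>
     (\<lambda>w. restrict (\<lambda>t. X t w) (space TS)) \<in> M \<rightarrow>\<^sub>M (\<Pi>\<^sub>M t\<in>space TS. borel) \<and>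
     integrable M (\<lambda>w. X (T w) w) \<and> (\<forall>k\<ge>k0. integrable M (\<lambda>w. X (Tk k w) w)) \<and>
     ((\<lambda>k. \<integral>w. X (Tk (k0 + k) w) w \<partial>M) \<longlonglongrightarrow> (\<integral>w. X (T w) w \<partial>M)) \<and>
     (\<integral>w. X (Tk k0 w) w \<partial>M) = 0 \<and>
     (\<forall>k>k0. markov_chain4 M (\<Pi>\<^sub>M t\<in>space TS. borel) (\<lambda>w. restrict (\<lambda>t. X t w) (space TS))
                TS T TS (Tk k) TS (Tk (k - 1)))"

definition ennsqrt :: "ennreal \<Rightarrow> ennreal" where
  "ennsqrt x = (if x = \<infinity> then \<infinity> else ennreal (sqrt (enn2real x)))"

end

(*
  By the symmetry of the supersample under swapping its two columns together with the mask, the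
  expected generalization error equals (2/n) * sum_i E[eps_i L_i^+].  Each E[eps_i L_i^+]
  telescopes along the stochastic chain into increments E[eps_i L_{i,k}] - E[eps_i L_{i,k-1}].
  Let h(t) be a version of P(U_i = 1 | L_{i,k} = t).  Conditioning on L_{i,k}, and using the Markov
  property for L_{i,k-1}, eps_i may be replaced by 2 h(L_{i,k}) - 1 in both terms, so the increment
  is E[(2 h(L_{i,k}) - 1) (L_{i,k} - L_{i,k-1})].  Cauchy-Schwarz bounds it by
  sqrt(E[(2 h - 1)^2] E[(L_{i,k} - L_{i,k-1})^2]), and the binary Pinsker inequality, integrated
  over the law of L_{i,k}, gives E[(2 h - 1)^2] <= 2 I(L_{i,k}; U_i).
*)
theory Submission
  imports Defs
begin

section \<open>Binary Pinsker inequality\<close>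

lemma ln_one_plus_minus_ln_one_minus_ge:
  fixes q :: real assumes "0 \<le> q" "q < 1"
  shows "2 * q \<le> ln (1 + q) - ln (1 - q)"
proof -
  let ?f = "\<lambda>x::real. ln (1 + x) - ln (1 - x) - 2 * x"
  have "?f 0 \<le> ?f q"
  proof (rule DERIV_nonneg_imp_nondecreasing[OF assms(1)])
    fix x assume x: "0 \<le> x" "x \<le> q"
    then have "x < 1" using assms by auto
    have "0 \<le> 2 * x\<^sup>2 / ((1 + x) * (1 - x))"
      using x \<open>x < 1\<close> by (intro divide_nonneg_pos) auto
    also have "\<dots> = 1 / (1 + x) + 1 / (1 - x) - 2"
      using x \<open>x < 1\<close> by (simp add: divide_simps power2_eq_square) argo
    finally show "\<exists>y. (?f has_real_derivative y) (at x) \<and> 0 \<le> y"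
      using x \<open>x < 1\<close> by (intro exI[of _ "1 / (1 + x) + 1 / (1 - x) - 2"] conjI)
        (auto intro!: derivative_eq_intros)
  qed
  then show ?thesis by simp
qed

lemma ln_two_ge_half: "1 / 2 \<le> ln (2::real)"
proof -
  have "exp (1 / 2 :: real) ^ 2 = exp 1" by (simp add: power2_eq_square exp_add[symmetric])
  also have "\<dots> \<le> 2 ^ 2" using exp_le by simp
  finally have "exp (1 / 2 :: real) \<le> 2" by (rule power2_le_imp_le) simp
  then show ?thesis by (subst ln_ge_iff) auto
qed

lemma binary_pinsker_centered:
  fixes q :: real assumes "\<bar>q\<bar> \<le> 1"
  shows "q\<^sup>2 \<le> (1 + q) * ln (1 + q) + (1 - q) * ln (1 - q)"
proof -
  let ?f = "\<lambda>x::real. (1 + x) * ln (1 + x) + (1 - x) * ln (1 - x) - x\<^sup>2"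
  have nonneg: "?f 0 \<le> ?f p" if "0 \<le> p" "p < 1" for p
  proof (rule DERIV_nonneg_imp_nondecreasing[OF \<open>0 \<le> p\<close>])
    fix x assume x: "0 \<le> x" "x \<le> p"
    then have "x < 1" using that by auto
    then show "\<exists>y. (?f has_real_derivative y) (at x) \<and> 0 \<le> y"
      using x ln_one_plus_minus_ln_one_minus_ge[OF x(1)]
      by (intro exI[of _ "ln (1 + x) - ln (1 - x) - 2 * x"] conjI)
        (auto intro!: derivative_eq_intros simp: divide_simps)
  qed
  have "?f 0 \<le> ?f \<bar>q\<bar>"
  proof (cases "\<bar>q\<bar> = 1")
    case True then show ?thesis using ln_two_ge_half by simp
  next
    case False
    then have "\<bar>q\<bar> < 1" using assms by simp
    then show ?thesis using nonneg[of "\<bar>q\<bar>"] by simp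
  qed
  moreover have "?f \<bar>q\<bar> = ?f q" by (cases "0 \<le> q") (auto simp: algebra_simps)
  ultimately show ?thesis by simp
qed

text \<open>The right-hand side is twice the divergence, in nats, of a \<open>p\<close>-coin from a fair coin.\<close>
lemma binary_pinsker:
  fixes p :: real assumes "0 \<le> p" "p \<le> 1"
  shows "(2 * p - 1)\<^sup>2 \<le> 2 * (p * ln (2 * p) + (1 - p) * ln (2 * (1 - p)))"
  using binary_pinsker_centered[of "2 * p - 1"] assms by (simp add: algebra_simps)

lemma abs_mult_ln_double_le_one:
  fixes x :: real assumes "0 \<le> x" "x \<le> 1"
  shows "\<bar>x * ln (2 * x)\<bar> \<le> 1"
proof (cases "x = 0")
  case False
  then have x: "0 < x" using assms by auto
  have upper: "ln (2 * x) \<le> 2 * x - 1" using x by (intro ln_le_minus_one) auto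
  have "- ln (2 * x) \<le> 1 / (2 * x) - 1"
    using ln_le_minus_one[of "1 / (2 * x)"] x by (simp add: ln_div)
  then have "x * (1 - 1 / (2 * x)) \<le> x * ln (2 * x)" using x by (intro mult_left_mono) auto
  moreover have "x * (1 - 1 / (2 * x)) = x - 1 / 2" using x by (simp add: field_simps)
  ultimately have lower: "x - 1 / 2 \<le> x * ln (2 * x)" by simp
  show ?thesis using assms upper lower mult_left_le_one_le[of "ln (2 * x)" x]
    by (cases "0 \<le> ln (2 * x)") (auto simp: abs_le_iff mult_nonneg_nonpos)
qed simp

section \<open>Square roots, Cauchy-Schwarz and telescoping in \<open>ennreal\<close>\<close>

lemma le_ennsqrt_if_power2_le:
  fixes x y :: ennreal assumes "x\<^sup>2 \<le> y"
  shows "x \<le> ennsqrt y"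
proof (cases "y = \<infinity>")
  case False
  then obtain s where s: "y = ennreal s" "0 \<le> s" by (cases y) auto
  then have "x \<noteq> \<infinity>" using assms by (auto simp: power2_eq_square top_unique)
  then obtain r where r: "x = ennreal r" "0 \<le> r" by (cases x) auto
  then have "r\<^sup>2 \<le> s" using assms s by (simp add: ennreal_power)
  then have "r \<le> sqrt s" using r(2) by (intro real_le_rsqrt)
  then show ?thesis using r s by (simp add: ennsqrt_def)
qed (simp add: ennsqrt_def)

lemma ennsqrt_mono: "x \<le> y \<Longrightarrow> ennsqrt x \<le> ennsqrt y"
  by (cases x; cases y) (auto simp: ennsqrt_def top_unique)

lemma integral_mult_le_ennsqrt:
  fixes a D :: "'a \<Rightarrow> real"
  assumes [measurable]: "a \<in> borel_measurable M" "D \<in> borel_measurable M"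
    and int: "integrable M (\<lambda>\<omega>. a \<omega> * D \<omega>)"
  shows "ereal (\<integral>\<omega>. a \<omega> * D \<omega> \<partial>M)
       \<le> enn2ereal (ennsqrt ((\<integral>\<^sup>+\<omega>. ennreal ((a \<omega>)\<^sup>2) \<partial>M) * (\<integral>\<^sup>+\<omega>. ennreal ((D \<omega>)\<^sup>2) \<partial>M)))"
proof -
  have "(\<integral>\<^sup>+\<omega>. ennreal \<bar>a \<omega>\<bar> * ennreal \<bar>D \<omega>\<bar> \<partial>M) = (\<integral>\<^sup>+\<omega>. ennreal \<bar>a \<omega> * D \<omega>\<bar> \<partial>M)"
    by (intro nn_integral_cong) (simp add: abs_mult ennreal_mult)
  also have "\<dots> = ennreal (\<integral>\<omega>. \<bar>a \<omega> * D \<omega>\<bar> \<partial>M)"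
    using int by (intro nn_integral_eq_integral) auto
  finally have abs_integral: "(\<integral>\<^sup>+\<omega>. ennreal \<bar>a \<omega>\<bar> * ennreal \<bar>D \<omega>\<bar> \<partial>M) = ennreal (\<integral>\<omega>. \<bar>a \<omega> * D \<omega>\<bar> \<partial>M)" .
  have sq: "ennreal \<bar>x\<bar> ^ 2 = ennreal (x\<^sup>2)" for x :: real
    by (simp add: ennreal_power)
  have "ennreal (\<integral>\<omega>. \<bar>a \<omega> * D \<omega>\<bar> \<partial>M)
      \<le> ennsqrt ((\<integral>\<^sup>+\<omega>. ennreal ((a \<omega>)\<^sup>2) \<partial>M) * (\<integral>\<^sup>+\<omega>. ennreal ((D \<omega>)\<^sup>2) \<partial>M))"
    using Cauchy_Schwarz_nn_integral[of "\<lambda>\<omega>. ennreal \<bar>a \<omega>\<bar>" M "\<lambda>\<omega>. ennreal \<bar>D \<omega>\<bar>"]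
    unfolding abs_integral sq by (intro le_ennsqrt_if_power2_le) simp
  moreover have "(\<integral>\<omega>. a \<omega> * D \<omega> \<partial>M) \<le> (\<integral>\<omega>. \<bar>a \<omega> * D \<omega>\<bar> \<partial>M)"
    using int by (intro integral_mono) auto
  ultimately have "ereal (\<integral>\<omega>. a \<omega> * D \<omega> \<partial>M) \<le> enn2ereal (ennreal (\<integral>\<omega>. \<bar>a \<omega> * D \<omega>\<bar> \<partial>M))"
    by simp
  also have "\<dots> \<le> enn2ereal (ennsqrt ((\<integral>\<^sup>+\<omega>. ennreal ((a \<omega>)\<^sup>2) \<partial>M) * (\<integral>\<^sup>+\<omega>. ennreal ((D \<omega>)\<^sup>2) \<partial>M)))"
    using \<open>ennreal _ \<le> ennsqrt _\<close> by (simp add: less_eq_ennreal.rep_eq)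
  finally show ?thesis .
qed

lemma limit_le_suminf_of_increments_le:
  fixes E :: "nat \<Rightarrow> real" and b :: "nat \<Rightarrow> ennreal"
  assumes lim: "E \<longlonglongrightarrow> L" and start: "E 0 = 0"
    and increment: "\<And>k. ereal (E (Suc k) - E k) \<le> enn2ereal (b k)"
  shows "ereal L \<le> enn2ereal (\<Sum>k. b k)"
proof -
  have partial: "ereal (E K) \<le> enn2ereal (\<Sum>k<K. b k)" for K
  proof (induction K)
    case 0 then show ?case using start by (simp add: zero_ennreal.rep_eq)
  next
    case (Suc K)
    have "ereal (E (Suc K)) = ereal (E K) + ereal (E (Suc K) - E K)" by simp
    also have "\<dots> \<le> enn2ereal (\<Sum>k<K. b k) + enn2ereal (b K)"
      using Suc.IH increment by (rule add_mono)
    finally show ?case by (simp add: plus_ennreal.rep_eq)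
  qed
  have "ereal (E K) \<le> enn2ereal (\<Sum>k. b k)" for K
  proof -
    have "(\<Sum>k<K. b k) \<le> (\<Sum>k. b k)" by (rule sum_le_suminf[OF summableI]) auto
    then show ?thesis using partial[of K] by (simp add: less_eq_ennreal.rep_eq)
  qed
  then show ?thesis by (intro LIMSEQ_le_const2[OF tendsto_ereal[OF lim]]) auto
qed

section \<open>Conditional probability of an event given a random variable\<close>

definition is_cond_prob ::
  "'a measure \<Rightarrow> 't measure \<Rightarrow> ('a \<Rightarrow> 't) \<Rightarrow> ('a \<Rightarrow> bool) \<Rightarrow> ('t \<Rightarrow> real) \<Rightarrow> bool" where
  "is_cond_prob M S T U h \<longleftrightarrow> h \<in> borel_measurable S \<and> (\<forall>t\<in>space S. 0 \<le> h t \<and> h t \<le> 1) \<and>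
     (\<forall>A\<in>sets S. emeasure M {\<omega>\<in>space M. T \<omega> \<in> A \<and> U \<omega>}
                  = (\<integral>\<^sup>+t. indicator A t * ennreal (h t) \<partial>distr M S T))"

lemma emeasure_distr_density_indicator:
  assumes [measurable]: "T \<in> M \<rightarrow>\<^sub>M S" "A \<in> sets S" "Measurable.pred M P"
  shows "emeasure (distr (density M (indicator {\<omega>\<in>space M. P \<omega>})) S T) A = emeasure M {\<omega>\<in>space M. T \<omega> \<in> A \<and> P \<omega>}"
proof -
  have "emeasure (distr (density M (indicator {\<omega>\<in>space M. P \<omega>})) S T) A
      = (\<integral>\<^sup>+\<omega>. indicator (T -` A \<inter> space M) \<omega> * indicator {\<omega>\<in>space M. P \<omega>} \<omega> \<partial>M)"
    by (simp add: emeasure_distr emeasure_density mult.commute)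
  also have "\<dots> = (\<integral>\<^sup>+\<omega>. indicator {\<omega>\<in>space M. T \<omega> \<in> A \<and> P \<omega>} \<omega> \<partial>M)"
    by (intro nn_integral_cong) (auto split: split_indicator)
  also have "\<dots> = emeasure M {\<omega>\<in>space M. T \<omega> \<in> A \<and> P \<omega>}"
    by (intro nn_integral_indicator) measurable
  finally show ?thesis .
qed

lemma (in prob_space) event_density_exists:
  assumes [measurable]: "T \<in> M \<rightarrow>\<^sub>M S" "Measurable.pred M P"
  shows "\<exists>g \<in> borel_measurable S. \<forall>A\<in>sets S.
    emeasure M {\<omega>\<in>space M. T \<omega> \<in> A \<and> P \<omega>} = (\<integral>\<^sup>+t. g t * indicator A t \<partial>distr M S T)"
proof -
  let ?\<nu> = "distr M S T" and ?\<nu>P = "distr (density M (indicator {\<omega>\<in>space M. P \<omega>})) S T"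
  interpret \<nu>: prob_space ?\<nu> by (rule prob_space_distr) simp
  have "absolutely_continuous ?\<nu> ?\<nu>P"
    unfolding absolutely_continuous_def
  proof
    fix A assume A: "A \<in> null_sets ?\<nu>"
    then have [measurable]: "A \<in> sets S" by auto
    have "emeasure ?\<nu>P A = emeasure M {\<omega>\<in>space M. T \<omega> \<in> A \<and> P \<omega>}"
      by (rule emeasure_distr_density_indicator) auto
    also have "\<dots> \<le> emeasure M (T -` A \<inter> space M)"
      by (intro emeasure_mono) auto
    also have "\<dots> = 0"
      using A by (simp add: null_sets_def emeasure_distr)
    finally show "A \<in> null_sets ?\<nu>P" by (auto simp: null_sets_def)
  qed
  then have "\<exists>g\<in>borel_measurable ?\<nu>. density ?\<nu> g = ?\<nu>P"
    by (intro \<nu>.Radon_Nikodym) auto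
  then obtain g where [measurable]: "g \<in> borel_measurable ?\<nu>" and density_g: "density ?\<nu> g = ?\<nu>P"
    by blast
  have "emeasure M {\<omega>\<in>space M. T \<omega> \<in> A \<and> P \<omega>} = (\<integral>\<^sup>+t. g t * indicator A t \<partial>?\<nu>)"
    if "A \<in> sets S" for A
  proof -
    have "emeasure M {\<omega>\<in>space M. T \<omega> \<in> A \<and> P \<omega>} = emeasure (density ?\<nu> g) A"
      unfolding density_g by (rule emeasure_distr_density_indicator[symmetric]) (use that in auto)
    also have "\<dots> = (\<integral>\<^sup>+t. g t * indicator A t \<partial>?\<nu>)"
      using that by (simp add: emeasure_density)
    finally show ?thesis .
  qed
  moreover have "g \<in> borel_measurable S" by (simp add: measurable_cong_sets[of ?\<nu> S])
  ultimately show ?thesis by blast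
qed

lemma (in prob_space) AE_event_densities_add_one:
  fixes U :: "'a \<Rightarrow> bool"
  assumes [measurable]: "T \<in> M \<rightarrow>\<^sub>M S" "U \<in> M \<rightarrow>\<^sub>M count_space UNIV" "\<And>b. g b \<in> borel_measurable S"
    and g: "\<And>b A. A \<in> sets S \<Longrightarrow>
      emeasure M {\<omega>\<in>space M. T \<omega> \<in> A \<and> U \<omega> = b} = (\<integral>\<^sup>+t. g b t * indicator A t \<partial>distr M S T)"
  shows "AE t in distr M S T. g True t + g False t = 1"
proof -
  let ?\<nu> = "distr M S T"
  interpret \<nu>: prob_space ?\<nu> by (rule prob_space_distr) simp
  have "density ?\<nu> (\<lambda>t. g True t + g False t) = density ?\<nu> (\<lambda>_. 1)"
  proof (rule measure_eqI)
    fix A assume "A \<in> sets (density ?\<nu> (\<lambda>t. g True t + g False t))"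
    then have A[measurable]: "A \<in> sets S" by simp
    have "emeasure (density ?\<nu> (\<lambda>t. g True t + g False t)) A
        = (\<integral>\<^sup>+t. g True t * indicator A t + g False t * indicator A t \<partial>?\<nu>)"
      by (subst emeasure_density) (auto intro!: nn_integral_cong simp: distrib_right)
    also have "\<dots> = emeasure M {\<omega>\<in>space M. T \<omega> \<in> A \<and> U \<omega> = True}
        + emeasure M {\<omega>\<in>space M. T \<omega> \<in> A \<and> U \<omega> = False}"
      by (subst nn_integral_add) (auto simp: g[OF A, symmetric])
    also have "\<dots> = emeasure M (T -` A \<inter> space M)"
      by (subst plus_emeasure) (auto intro!: arg_cong[where f="emeasure M"])
    also have "\<dots> = emeasure (density ?\<nu> (\<lambda>_. 1)) A"
      by (simp add: density_1 emeasure_distr)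
    finally show "emeasure (density ?\<nu> (\<lambda>t. g True t + g False t)) A = emeasure (density ?\<nu> (\<lambda>_. 1)) A" .
  qed simp
  then show ?thesis by (intro \<nu>.density_unique) auto
qed

lemma (in prob_space) is_cond_prob_exists:
  assumes [measurable]: "T \<in> M \<rightarrow>\<^sub>M S" "U \<in> M \<rightarrow>\<^sub>M count_space UNIV"
  obtains h where "is_cond_prob M S T U h"
proof -
  let ?\<nu> = "distr M S T"
  have "\<forall>b. \<exists>g \<in> borel_measurable S. \<forall>A\<in>sets S.
      emeasure M {\<omega>\<in>space M. T \<omega> \<in> A \<and> U \<omega> = b} = (\<integral>\<^sup>+t. g t * indicator A t \<partial>?\<nu>)"
    by (intro allI event_density_exists) measurable
  then have "\<exists>g. \<forall>b. g b \<in> borel_measurable S \<and> (\<forall>A\<in>sets S.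
      emeasure M {\<omega>\<in>space M. T \<omega> \<in> A \<and> U \<omega> = b} = (\<integral>\<^sup>+t. g b t * indicator A t \<partial>?\<nu>))"
    by (intro choice) blast
  then obtain g where g_meas[measurable]: "\<And>b. g b \<in> borel_measurable S" and g_event: "\<And>b A. A \<in> sets S \<Longrightarrow>
      emeasure M {\<omega>\<in>space M. T \<omega> \<in> A \<and> U \<omega> = b} = (\<integral>\<^sup>+t. g b t * indicator A t \<partial>?\<nu>)"
    by blast
  define h where "h t = min 1 (enn2real (g True t))" for t
  have "AE t in ?\<nu>. g True t + g False t = 1"
    using assms g_meas g_event by (rule AE_event_densities_add_one)
  then have "AE t in ?\<nu>. g True t = ennreal (h t)"
  proof eventually_elim
    case (elim t)
    then have "g True t \<le> 1" by (metis le_iff_add)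
    then show ?case by (cases "g True t") (auto simp: h_def min_absorb2 top_unique)
  qed
  then have "(\<integral>\<^sup>+t. g True t * indicator A t \<partial>?\<nu>) = (\<integral>\<^sup>+t. indicator A t * ennreal (h t) \<partial>?\<nu>)" for A
    by (intro nn_integral_cong_AE) (auto simp: mult.commute)
  moreover have "h \<in> borel_measurable S" unfolding h_def by measurable
  ultimately have "is_cond_prob M S T U h"
    using g_event[of _ True] unfolding is_cond_prob_def by (auto simp: h_def)
  then show ?thesis by (rule that)
qed

lemma (in prob_space) is_cond_prob_complement:
  assumes h: "is_cond_prob M S T U h" and [measurable]: "T \<in> M \<rightarrow>\<^sub>M S" "U \<in> M \<rightarrow>\<^sub>M count_space UNIV"
    and A[measurable]: "A \<in> sets S"
  shows "emeasure M {\<omega>\<in>space M. T \<omega> \<in> A \<and> \<not> U \<omega>} = (\<integral>\<^sup>+t. indicator A t * ennreal (1 - h t) \<partial>distr M S T)"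
proof -
  have [measurable]: "h \<in> borel_measurable S" and h_bounds: "\<And>t. t \<in> space S \<Longrightarrow> 0 \<le> h t \<and> h t \<le> 1"
    using h by (auto simp: is_cond_prob_def)
  have "emeasure M {\<omega>\<in>space M. T \<omega> \<in> A \<and> U \<omega>} + emeasure M {\<omega>\<in>space M. T \<omega> \<in> A \<and> \<not> U \<omega>}
      = emeasure M {\<omega>\<in>space M. T \<omega> \<in> A}"
    by (subst plus_emeasure) (auto intro!: arg_cong[where f="emeasure M"])
  also have "\<dots> = emeasure (distr M S T) A"
    by (subst emeasure_distr) (auto intro!: arg_cong[where f="emeasure M"])
  also have "\<dots> = (\<integral>\<^sup>+t. indicator A t * ennreal (h t) + indicator A t * ennreal (1 - h t) \<partial>distr M S T)"
  proof -
    have "emeasure (distr M S T) A = (\<integral>\<^sup>+t. indicator A t \<partial>distr M S T)" by simp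
    also have "\<dots> = (\<integral>\<^sup>+t. indicator A t * ennreal (h t) + indicator A t * ennreal (1 - h t) \<partial>distr M S T)"
      using h_bounds by (intro nn_integral_cong) (auto simp: ennreal_plus[symmetric] simp del: ennreal_plus
        split: split_indicator)
    finally show ?thesis .
  qed
  also have "\<dots> = emeasure M {\<omega>\<in>space M. T \<omega> \<in> A \<and> U \<omega>}
      + (\<integral>\<^sup>+t. indicator A t * ennreal (1 - h t) \<partial>distr M S T)"
    using h A by (subst nn_integral_add) (auto simp: is_cond_prob_def)
  finally show ?thesis by (simp add: ennreal_add_left_cancel emeasure_finite)
qed

section \<open>Mutual information with a fair bit\<close>

lemma (in prob_space) distr_fair_bool:
  assumes [measurable]: "U \<in> M \<rightarrow>\<^sub>M count_space UNIV"
    and fair: "emeasure M {\<omega>\<in>space M. U \<omega>} = ennreal (1/2)"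
  shows "distr M (count_space UNIV) U = density (count_space UNIV) (\<lambda>_. ennreal (1/2))"
proof (rule measure_eqI_countable[of _ UNIV])
  fix b :: bool
  have "{\<omega>\<in>space M. \<not> U \<omega>} = space M - {\<omega>\<in>space M. U \<omega>}" by auto
  then have "emeasure M {\<omega>\<in>space M. \<not> U \<omega>} = 1 - emeasure M {\<omega>\<in>space M. U \<omega>}"
    by (simp add: emeasure_compl emeasure_space_1)
  also have "\<dots> = ennreal (1/2)" unfolding fair ennreal_1[symmetric] by (subst ennreal_minus) auto
  finally have "emeasure M {\<omega>\<in>space M. U \<omega> = b} = ennreal (1/2)"
    using fair by (cases b) simp_all
  then show "emeasure (distr M (count_space UNIV) U) {b} = emeasure (density (count_space UNIV) (\<lambda>_. ennreal (1/2))) {b}"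
    by (simp add: emeasure_distr emeasure_density vimage_def Int_def conj_commute)
qed auto

lemma (in prob_space) distr_pair_bool_eq_density:
  fixes U :: "'a \<Rightarrow> bool"
  assumes h: "is_cond_prob M S T U h"
    and [measurable]: "T \<in> M \<rightarrow>\<^sub>M S" "U \<in> M \<rightarrow>\<^sub>M count_space UNIV"
  shows "distr M (S \<Otimes>\<^sub>M count_space UNIV) (\<lambda>\<omega>. (T \<omega>, U \<omega>))
       = density (distr M S T \<Otimes>\<^sub>M count_space UNIV)
           (\<lambda>x. ennreal (if snd x then h (fst x) else 1 - h (fst x)))"
    (is "_ = density (?\<nu> \<Otimes>\<^sub>M ?C) ?g")
proof (rule measure_eqI)
  interpret C: sigma_finite_measure ?C by (rule sigma_finite_measure_count_space_finite) auto
  have [measurable]: "h \<in> borel_measurable S" and h_True: "\<And>A. A \<in> sets S \<Longrightarrow>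
      emeasure M {\<omega>\<in>space M. T \<omega> \<in> A \<and> U \<omega>} = (\<integral>\<^sup>+t. indicator A t * ennreal (h t) \<partial>?\<nu>)"
    using h by (auto simp: is_cond_prob_def)
  have sets_eq: "sets (?\<nu> \<Otimes>\<^sub>M ?C) = sets (S \<Otimes>\<^sub>M ?C)" by (intro sets_pair_measure_cong) auto
  then show "sets (distr M (S \<Otimes>\<^sub>M ?C) (\<lambda>\<omega>. (T \<omega>, U \<omega>))) = sets (density (?\<nu> \<Otimes>\<^sub>M ?C) ?g)"
    by simp
  fix X assume "X \<in> sets (distr M (S \<Otimes>\<^sub>M ?C) (\<lambda>\<omega>. (T \<omega>, U \<omega>)))"
  then have X[measurable]: "X \<in> sets (S \<Otimes>\<^sub>M ?C)" by simp
  define X' where "X' b = (\<lambda>t. (t, b)) -` X" for b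
  have X'[measurable]: "X' b \<in> sets S" for b unfolding X'_def by (rule sets_Pair2[OF X])
  have "emeasure (density (?\<nu> \<Otimes>\<^sub>M ?C) ?g) X = (\<integral>\<^sup>+t. (\<integral>\<^sup>+b. ?g (t, b) * indicator X (t, b) \<partial>?C) \<partial>?\<nu>)"
    using sets_eq by (simp add: emeasure_density C.nn_integral_fst[symmetric]
        measurable_cong_sets[OF sets_eq refl])
  also have "\<dots> = (\<integral>\<^sup>+t. indicator (X' True) t * ennreal (h t) + indicator (X' False) t * ennreal (1 - h t) \<partial>?\<nu>)"
    by (intro nn_integral_cong)
      (simp add: nn_integral_count_space_finite UNIV_bool X'_def indicator_def add.commute)
  also have "\<dots> = emeasure M {\<omega>\<in>space M. T \<omega> \<in> X' True \<and> U \<omega>} + emeasure M {\<omega>\<in>space M. T \<omega> \<in> X' False \<and> \<not> U \<omega>}"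
    by (simp add: nn_integral_add h_True is_cond_prob_complement[OF h])
  also have "\<dots> = emeasure M ({\<omega>\<in>space M. T \<omega> \<in> X' True \<and> U \<omega>} \<union> {\<omega>\<in>space M. T \<omega> \<in> X' False \<and> \<not> U \<omega>})"
    by (intro plus_emeasure) auto
  also have "\<dots> = emeasure M ((\<lambda>\<omega>. (T \<omega>, U \<omega>)) -` X \<inter> space M)"
    by (intro arg_cong[where f="emeasure M"]) (auto simp: X'_def; metis (full_types))
  also have "\<dots> = emeasure (distr M (S \<Otimes>\<^sub>M ?C) (\<lambda>\<omega>. (T \<omega>, U \<omega>))) X"
    by (simp add: emeasure_distr)
  finally show "emeasure (distr M (S \<Otimes>\<^sub>M ?C) (\<lambda>\<omega>. (T \<omega>, U \<omega>))) X = emeasure (density (?\<nu> \<Otimes>\<^sub>M ?C) ?g) X"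
    by simp
qed

lemma (in prob_space) mutual_information_fair_bool:
  fixes U :: "'a \<Rightarrow> bool"
  assumes h: "is_cond_prob M S T U h"
    and [measurable]: "T \<in> M \<rightarrow>\<^sub>M S" "U \<in> M \<rightarrow>\<^sub>M count_space UNIV"
    and fair: "emeasure M {\<omega>\<in>space M. U \<omega>} = ennreal (1/2)"
  shows "mutual_information (exp 1) S (count_space UNIV) T U
       = (\<integral>t. h t * ln (2 * h t) + (1 - h t) * ln (2 * (1 - h t)) \<partial>distr M S T)"
proof -
  let ?\<nu> = "distr M S T" and ?C = "count_space (UNIV :: bool set)"
  define g where "g x = (if snd x then h (fst x) else 1 - h (fst x))" for x
  interpret \<nu>: prob_space ?\<nu> by (rule prob_space_distr) simp
  interpret C: sigma_finite_measure ?C by (rule sigma_finite_measure_count_space_finite) auto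
  interpret \<nu>C: pair_sigma_finite ?\<nu> ?C ..
  interpret \<nu>C: finite_measure "?\<nu> \<Otimes>\<^sub>M ?C"
    by (rule finite_measureI) (simp add: space_pair_measure C.emeasure_pair_measure_Times ennreal_mult_eq_top_iff)
  have [measurable]: "h \<in> borel_measurable S" and h_bounds: "\<And>t. t \<in> space S \<Longrightarrow> 0 \<le> h t \<and> h t \<le> 1"
    using h by (auto simp: is_cond_prob_def)
  have [measurable]: "g \<in> borel_measurable (?\<nu> \<Otimes>\<^sub>M ?C)" unfolding g_def by measurable
  have g_bounds: "0 \<le> g x \<and> g x \<le> 1" if "x \<in> space (?\<nu> \<Otimes>\<^sub>M ?C)" for x
    using that h_bounds by (auto simp: g_def space_pair_measure)
  have "?\<nu> \<Otimes>\<^sub>M distr M ?C U = density ?\<nu> (\<lambda>_. 1) \<Otimes>\<^sub>M density ?C (\<lambda>_. ennreal (1/2))"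
    by (simp add: distr_fair_bool[OF _ fair] density_1)
  also have "\<dots> = density (?\<nu> \<Otimes>\<^sub>M ?C) (\<lambda>_. ennreal (1/2))"
    by (subst pair_measure_density)
      (auto simp: \<nu>.sigma_finite_measure_axioms C.sigma_finite_measure_axioms
        C.sigma_finite_iff_density_finite case_prod_unfold)
  finally have product: "?\<nu> \<Otimes>\<^sub>M distr M ?C U = density (?\<nu> \<Otimes>\<^sub>M ?C) (\<lambda>_. ennreal (1/2))" .
  have "mutual_information (exp 1) S ?C T U
      = KL_divergence (exp 1) (density (?\<nu> \<Otimes>\<^sub>M ?C) (\<lambda>_. ennreal (1/2))) (density (?\<nu> \<Otimes>\<^sub>M ?C) (\<lambda>x. ennreal (g x)))"
    unfolding mutual_information_def product distr_pair_bool_eq_density[OF h assms(2,3)] g_def ..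
  also have "\<dots> = (\<integral>x. g x * ln (2 * g x) \<partial>(?\<nu> \<Otimes>\<^sub>M ?C))"
    using g_bounds by (subst \<nu>C.KL_density_density)
      (auto simp: g_def log_def mult.commute intro!: Bochner_Integration.integral_cong)
  also have "\<dots> = (\<integral>t. (\<integral>b. g (t, b) * ln (2 * g (t, b)) \<partial>?C) \<partial>?\<nu>)"
    by (intro \<nu>C.integral_fst'[symmetric] \<nu>C.integrable_const_bound[where B=1] AE_I2)
      (auto intro!: abs_mult_ln_double_le_one simp: g_bounds)
  also have "\<dots> = (\<integral>t. h t * ln (2 * h t) + (1 - h t) * ln (2 * (1 - h t)) \<partial>?\<nu>)"
    by (simp add: lebesgue_integral_count_space_finite UNIV_bool g_def add.commute)
  finally show ?thesis .
qed

lemma (in prob_space) integral_bias_sq_le_mutual_information: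
  fixes U :: "'a \<Rightarrow> bool"
  assumes h: "is_cond_prob M S T U h"
    and [measurable]: "T \<in> M \<rightarrow>\<^sub>M S" "U \<in> M \<rightarrow>\<^sub>M count_space UNIV"
    and fair: "emeasure M {\<omega>\<in>space M. U \<omega>} = ennreal (1/2)"
  shows "(\<integral>\<omega>. (2 * h (T \<omega>) - 1)\<^sup>2 \<partial>M) \<le> 2 * mutual_information (exp 1) S (count_space UNIV) T U"
proof -
  let ?\<nu> = "distr M S T"
  interpret \<nu>: prob_space ?\<nu> by (rule prob_space_distr) simp
  have [measurable]: "h \<in> borel_measurable S" and h_bounds: "\<And>t. t \<in> space ?\<nu> \<Longrightarrow> 0 \<le> h t \<and> h t \<le> 1"
    using h by (auto simp: is_cond_prob_def)
  have "(\<integral>\<omega>. (2 * h (T \<omega>) - 1)\<^sup>2 \<partial>M) = (\<integral>t. (2 * h t - 1)\<^sup>2 \<partial>?\<nu>)"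
    by (rule integral_distr[symmetric]) auto
  also have "\<dots> \<le> (\<integral>t. 2 * (h t * ln (2 * h t) + (1 - h t) * ln (2 * (1 - h t))) \<partial>?\<nu>)"
  proof (rule integral_mono)
    show "integrable ?\<nu> (\<lambda>t. (2 * h t - 1)\<^sup>2)"
    proof (intro \<nu>.integrable_const_bound[where B=1] AE_I2)
      fix t assume "t \<in> space ?\<nu>"
      then have "\<bar>2 * h t - 1\<bar> \<le> 1" using h_bounds[of t] by (simp add: abs_le_iff)
      then show "norm ((2 * h t - 1)\<^sup>2) \<le> 1" by (simp add: abs_square_le_1)
    qed simp
    show "integrable ?\<nu> (\<lambda>t. 2 * (h t * ln (2 * h t) + (1 - h t) * ln (2 * (1 - h t))))"
    proof (intro \<nu>.integrable_const_bound[where B=4] AE_I2)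
      fix t assume "t \<in> space ?\<nu>"
      then have "\<bar>h t * ln (2 * h t)\<bar> \<le> 1" "\<bar>(1 - h t) * ln (2 * (1 - h t))\<bar> \<le> 1"
        using h_bounds[of t] abs_mult_ln_double_le_one[of "h t"] abs_mult_ln_double_le_one[of "1 - h t"]
        by auto
      then show "norm (2 * (h t * ln (2 * h t) + (1 - h t) * ln (2 * (1 - h t)))) \<le> 4" by simp
    qed simp
  qed (use h_bounds binary_pinsker in auto)
  also have "\<dots> = 2 * mutual_information (exp 1) S (count_space UNIV) T U"
    unfolding mutual_information_fair_bool[OF h assms(2,3) fair] by (rule integral_mult_right_zero)
  finally show ?thesis .
qed

lemma (in prob_space) nn_integral_bias_sq_le_mutual_information:
  fixes U :: "'a \<Rightarrow> bool"
  assumes h: "is_cond_prob M S T U h"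
    and T: "T \<in> M \<rightarrow>\<^sub>M S" and U: "U \<in> M \<rightarrow>\<^sub>M count_space UNIV"
    and fair: "emeasure M {\<omega>\<in>space M. U \<omega>} = ennreal (1/2)"
  shows "(\<integral>\<^sup>+\<omega>. ennreal ((2 * h (T \<omega>) - 1)\<^sup>2) \<partial>M) \<le> 2 * ennreal (mutual_information (exp 1) S (count_space UNIV) T U)"
proof -
  let ?I = "mutual_information (exp 1) S (count_space UNIV) T U"
  have [measurable]: "h \<in> borel_measurable S" and h_bounds: "\<And>t. t \<in> space S \<Longrightarrow> 0 \<le> h t \<and> h t \<le> 1"
    using h by (auto simp: is_cond_prob_def)
  have "integrable M (\<lambda>\<omega>. (2 * h (T \<omega>) - 1)\<^sup>2)"
  proof (rule integrable_const_bound[where B=1])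
    show "AE \<omega> in M. norm ((2 * h (T \<omega>) - 1)\<^sup>2) \<le> 1"
      using h_bounds measurable_space[OF T] by (intro AE_I2) (force simp: abs_square_le_1 abs_le_iff)
  qed (use T in measurable)
  then have "(\<integral>\<^sup>+\<omega>. ennreal ((2 * h (T \<omega>) - 1)\<^sup>2) \<partial>M) = ennreal (\<integral>\<omega>. (2 * h (T \<omega>) - 1)\<^sup>2 \<partial>M)"
    by (intro nn_integral_eq_integral) auto
  moreover have le: "(\<integral>\<omega>. (2 * h (T \<omega>) - 1)\<^sup>2 \<partial>M) \<le> 2 * ?I"
    by (rule integral_bias_sq_le_mutual_information[OF h T U fair])
  moreover have "0 \<le> (\<integral>\<omega>. (2 * h (T \<omega>) - 1)\<^sup>2 \<partial>M)" by (rule integral_nonneg_AE) simp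
  then have "0 \<le> ?I" using le by linarith
  moreover have "2 * ennreal ?I = ennreal (2 * ?I)" using \<open>0 \<le> ?I\<close> by (simp add: ennreal_mult)
  ultimately show ?thesis by (simp add: ennreal_leI)
qed

section \<open>Replacing the sign by the conditional bias\<close>

lemma (in prob_space) integral_indicator_eq_cond_prob:
  fixes U :: "'a \<Rightarrow> bool"
  assumes h: "is_cond_prob M S T U h"
    and [measurable]: "T \<in> M \<rightarrow>\<^sub>M S" "U \<in> M \<rightarrow>\<^sub>M count_space UNIV" "B \<in> sets S"
  shows "(\<integral>\<omega>. of_bool (U \<omega>) * indicator B (T \<omega>) \<partial>M) = (\<integral>\<omega>. h (T \<omega>) * indicator B (T \<omega>) \<partial>M)"
proof -
  have [measurable]: "h \<in> borel_measurable S" and h_bounds: "\<And>t. t \<in> space S \<Longrightarrow> 0 \<le> h t \<and> h t \<le> 1"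
    and h_event: "emeasure M {\<omega>\<in>space M. T \<omega> \<in> B \<and> U \<omega>} = (\<integral>\<^sup>+t. indicator B t * ennreal (h t) \<partial>distr M S T)"
    using h by (auto simp: is_cond_prob_def)
  have "(\<integral>\<^sup>+\<omega>. ennreal (of_bool (U \<omega>) * indicator B (T \<omega>)) \<partial>M) = emeasure M {\<omega>\<in>space M. T \<omega> \<in> B \<and> U \<omega>}"
  proof -
    have "(\<integral>\<^sup>+\<omega>. ennreal (of_bool (U \<omega>) * indicator B (T \<omega>)) \<partial>M)
        = (\<integral>\<^sup>+\<omega>. indicator {\<omega>\<in>space M. T \<omega> \<in> B \<and> U \<omega>} \<omega> \<partial>M)"
      by (intro nn_integral_cong) (auto split: split_indicator)
    then show ?thesis by (simp add: nn_integral_indicator)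
  qed
  also have "\<dots> = (\<integral>\<^sup>+\<omega>. ennreal (h (T \<omega>) * indicator B (T \<omega>)) \<partial>M)"
    unfolding h_event using h_bounds measurable_space[OF assms(2)]
    by (subst nn_integral_distr) (auto intro!: nn_integral_cong simp: mult.commute split: split_indicator)
  finally show ?thesis
    using h_bounds measurable_space[OF assms(2)] by (simp add: integral_eq_nn_integral)
qed

lemma (in prob_space) cond_exp_eq_cond_prob:
  fixes U :: "'a \<Rightarrow> bool"
  assumes h: "is_cond_prob M S T U h"
    and [measurable]: "T \<in> M \<rightarrow>\<^sub>M S" "U \<in> M \<rightarrow>\<^sub>M count_space UNIV"
  shows "AE \<omega> in M. real_cond_exp M (vimage_algebra (space M) T S) (\<lambda>\<omega>. of_bool (U \<omega>)) \<omega> = h (T \<omega>)"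
proof -
  let ?F = "vimage_algebra (space M) T S"
  have T_space: "T \<in> space M \<rightarrow> space S" using measurable_space[OF assms(2)] by auto
  interpret F: finite_measure_subalgebra M ?F
    using T_space by unfold_locales
      (auto simp: subalgebra_def sets_vimage_algebra2 intro!: measurable_sets[OF assms(2)])
  have h_meas[measurable]: "h \<in> borel_measurable S"
    and h_bounds: "\<And>t. t \<in> space S \<Longrightarrow> 0 \<le> h t \<and> h t \<le> 1"
    using h by (auto simp: is_cond_prob_def)
  have [measurable]: "(\<lambda>\<omega>. h (T \<omega>)) \<in> borel_measurable ?F"
    using measurable_compose[OF measurable_vimage_algebra1[OF T_space] h_meas] by (simp add: comp_def)
  show ?thesis
  proof (rule F.real_cond_exp_charact)
    fix A assume "A \<in> sets ?F"
    then obtain B where B: "B \<in> sets S" and A: "A = T -` B \<inter> space M"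
      using sets_vimage_algebra2[OF T_space] by auto
    show "(\<integral>\<omega>\<in>A. of_bool (U \<omega>) \<partial>M) = (\<integral>\<omega>\<in>A. h (T \<omega>) \<partial>M)"
      using integral_indicator_eq_cond_prob[OF h assms(2,3) B]
      unfolding set_lebesgue_integral_def A
      by (simp add: indicator_def mult.commute cong: Bochner_Integration.integral_cong)
  qed (use h_bounds measurable_space[OF assms(2)] in \<open>auto intro!: integrable_const_bound[where B=1]\<close>)
qed

lemma (in prob_space) integral_mult_indicator_eq_of_cond_indep:
  assumes ci: "cond_indep M SX X SV V ST T" and A: "A \<in> sets SX" and B: "B \<in> sets SV"
    and f: "\<And>\<omega>. \<omega> \<in> space M \<Longrightarrow> indicator A (X \<omega>) = f \<omega>"
    and cond_exp_f: "AE \<omega> in M. real_cond_exp M (vimage_algebra (space M) T ST) f \<omega> = g \<omega>"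
    and [measurable]: "g \<in> borel_measurable M"
  shows "(\<integral>\<omega>. f \<omega> * indicator B (V \<omega>) \<partial>M) = (\<integral>\<omega>. g \<omega> * indicator B (V \<omega>) \<partial>M)"
proof -
  let ?F = "vimage_algebra (space M) T ST" and ?E = "real_cond_exp M (vimage_algebra (space M) T ST)"
  have [measurable]: "X \<in> M \<rightarrow>\<^sub>M SX" "V \<in> M \<rightarrow>\<^sub>M SV" "T \<in> M \<rightarrow>\<^sub>M ST" "A \<in> sets SX" "B \<in> sets SV"
    using ci A B by (auto simp: cond_indep_def)
  have T_space: "T \<in> space M \<rightarrow> space ST" using measurable_space[of T M ST] by auto
  interpret F: finite_measure_subalgebra M ?F
    using T_space by unfold_locales
      (auto simp: subalgebra_def sets_vimage_algebra2 intro!: measurable_sets[of T M ST])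
  have int_A: "integrable M (\<lambda>\<omega>. indicator A (X \<omega>) :: real)"
    by (intro integrable_const_bound[where B=1]) auto
  have f_meas: "f \<in> borel_measurable M"
    using measurable_cong[of M "\<lambda>\<omega>. indicator A (X \<omega>)" f borel] f by simp
  have "(\<integral>\<omega>. f \<omega> * indicator B (V \<omega>) \<partial>M) = (\<integral>\<omega>. indicator A (X \<omega>) * indicator B (V \<omega>) \<partial>M)"
    using f by (intro Bochner_Integration.integral_cong) auto
  also have "\<dots> = (\<integral>\<omega>. ?E (\<lambda>\<omega>. indicator A (X \<omega>) * indicator B (V \<omega>)) \<omega> \<partial>M)"
    by (rule F.real_cond_exp_int(2)[symmetric])
      (auto intro!: integrable_const_bound[where B=1] AE_I2 split: split_indicator)
  also have "\<dots> = (\<integral>\<omega>. ?E (\<lambda>\<omega>. indicator A (X \<omega>)) \<omega> * ?E (\<lambda>\<omega>. indicator B (V \<omega>)) \<omega> \<partial>M)"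
    using ci A B unfolding cond_indep_def by (intro integral_cong_AE) auto
  also have "\<dots> = (\<integral>\<omega>. ?E (\<lambda>\<omega>. indicator A (X \<omega>)) \<omega> * indicator B (V \<omega>) \<partial>M)"
  proof (rule F.real_cond_exp_intg(2))
    show "integrable M (\<lambda>\<omega>. ?E (\<lambda>\<omega>. indicator A (X \<omega>)) \<omega> * indicator B (V \<omega>))"
      by (rule Bochner_Integration.integrable_bound[OF F.real_cond_exp_int(1)[OF int_A]])
        (auto intro!: AE_I2 split: split_indicator)
  qed auto
  also have "\<dots> = (\<integral>\<omega>. g \<omega> * indicator B (V \<omega>) \<partial>M)"
  proof -
    have "AE \<omega> in M. ?E (\<lambda>\<omega>. indicator A (X \<omega>)) \<omega> = ?E f \<omega>"
      using f f_meas by (intro F.real_cond_exp_cong) auto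
    then show ?thesis using cond_exp_f by (intro integral_cong_AE) auto
  qed
  finally show ?thesis .
qed

lemma (in finite_measure) integral_mult_fun_eq_of_indicator_eq:
  fixes f g :: "'a \<Rightarrow> real" and \<phi> :: "'s \<Rightarrow> real"
  assumes [measurable]: "V \<in> M \<rightarrow>\<^sub>M S" "f \<in> borel_measurable M" "g \<in> borel_measurable M"
      "\<phi> \<in> borel_measurable S"
    and f: "\<And>\<omega>. \<omega> \<in> space M \<Longrightarrow> 0 \<le> f \<omega> \<and> f \<omega> \<le> 1"
    and g: "\<And>\<omega>. \<omega> \<in> space M \<Longrightarrow> 0 \<le> g \<omega> \<and> g \<omega> \<le> 1"
    and \<phi>: "\<And>s. s \<in> space S \<Longrightarrow> 0 \<le> \<phi> s"
    and eq: "\<And>B. B \<in> sets S \<Longrightarrow> (\<integral>\<omega>. f \<omega> * indicator B (V \<omega>) \<partial>M) = (\<integral>\<omega>. g \<omega> * indicator B (V \<omega>) \<partial>M)"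
  shows "(\<integral>\<omega>. f \<omega> * \<phi> (V \<omega>) \<partial>M) = (\<integral>\<omega>. g \<omega> * \<phi> (V \<omega>) \<partial>M)"
proof -
  have nn_integral_indicator_eq: "(\<integral>\<^sup>+\<omega>. ennreal (k \<omega>) * indicator B (V \<omega>) \<partial>M)
      = ennreal (\<integral>\<omega>. k \<omega> * indicator B (V \<omega>) \<partial>M)"
    if [measurable]: "k \<in> borel_measurable M" "B \<in> sets S"
      and k: "\<And>\<omega>. \<omega> \<in> space M \<Longrightarrow> 0 \<le> k \<omega> \<and> k \<omega> \<le> 1" for k B
    using k by (subst nn_integral_eq_integral[symmetric])
      (auto intro!: integrable_const_bound[where B=1] AE_I2 nn_integral_cong split: split_indicator)
  have "distr (density M f) S V = distr (density M g) S V"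
  proof (rule measure_eqI)
    fix B assume "B \<in> sets (distr (density M f) S V)"
    then have [measurable]: "B \<in> sets S" by simp
    have "emeasure (distr (density M k) S V) B = (\<integral>\<^sup>+\<omega>. ennreal (k \<omega>) * indicator B (V \<omega>) \<partial>M)"
      if [measurable]: "k \<in> borel_measurable M" for k
      by (simp add: emeasure_distr emeasure_density) (auto intro!: nn_integral_cong split: split_indicator)
    then show "emeasure (distr (density M f) S V) B = emeasure (distr (density M g) S V) B"
      by (simp add: nn_integral_indicator_eq f g eq)
  qed simp
  moreover have "(\<integral>\<^sup>+\<omega>. ennreal (k \<omega> * \<phi> (V \<omega>)) \<partial>M) = (\<integral>\<^sup>+s. ennreal (\<phi> s) \<partial>distr (density M k) S V)"
    if [measurable]: "k \<in> borel_measurable M" and k: "\<And>\<omega>. \<omega> \<in> space M \<Longrightarrow> 0 \<le> k \<omega>" for k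
    using k \<phi> measurable_space[OF assms(1)]
    by (simp add: nn_integral_distr nn_integral_density) (auto intro!: nn_integral_cong simp: ennreal_mult)
  ultimately have "(\<integral>\<^sup>+\<omega>. ennreal (f \<omega> * \<phi> (V \<omega>)) \<partial>M) = (\<integral>\<^sup>+\<omega>. ennreal (g \<omega> * \<phi> (V \<omega>)) \<partial>M)"
    using f g by simp
  then show ?thesis
    using f g \<phi> measurable_space[OF assms(1)] by (simp add: integral_eq_nn_integral)
qed

section \<open>Increments of a stochastic chain\<close>

abbreviation nonneg_reals :: "real measure" where
  "nonneg_reals \<equiv> restrict_space borel {0..}"

lemma (in prob_space) integral_sign_eq_integral_bias:
  fixes U :: "'a \<Rightarrow> bool" and g Y :: "'a \<Rightarrow> real"
  assumes [measurable]: "U \<in> M \<rightarrow>\<^sub>M count_space UNIV" "g \<in> borel_measurable M"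
    and g_bounds: "\<And>\<omega>. \<omega> \<in> space M \<Longrightarrow> 0 \<le> g \<omega> \<and> g \<omega> \<le> 1"
    and Y: "Y \<in> M \<rightarrow>\<^sub>M nonneg_reals" and int_Y: "integrable M (\<lambda>\<omega>. (if U \<omega> then 1 else -1) * Y \<omega>)"
    and bias: "\<And>B. B \<in> sets nonneg_reals \<Longrightarrow>
      (\<integral>\<omega>. of_bool (U \<omega>) * indicator B (Y \<omega>) \<partial>M) = (\<integral>\<omega>. g \<omega> * indicator B (Y \<omega>) \<partial>M)"
  shows "(\<integral>\<omega>. (if U \<omega> then 1 else -1) * Y \<omega> \<partial>M) = (\<integral>\<omega>. (2 * g \<omega> - 1) * Y \<omega> \<partial>M)"
proof -
  have [measurable]: "Y \<in> borel_measurable M" using Y by (simp add: measurable_restrict_space2_iff)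
  have int_Y': "integrable M Y"
    by (rule Bochner_Integration.integrable_bound[OF int_Y]) (auto intro!: AE_I2)
  have int_uY: "integrable M (\<lambda>\<omega>. of_bool (U \<omega>) * Y \<omega>)"
    by (rule Bochner_Integration.integrable_bound[OF int_Y']) (auto intro!: AE_I2)
  have int_gY: "integrable M (\<lambda>\<omega>. g \<omega> * Y \<omega>)"
  proof (rule Bochner_Integration.integrable_bound[OF int_Y'])
    show "AE \<omega> in M. norm (g \<omega> * Y \<omega>) \<le> norm (Y \<omega>)"
      using g_bounds by (intro AE_I2) (simp add: abs_mult mult_left_le_one_le)
  qed simp
  have "(\<integral>\<omega>. of_bool (U \<omega>) * Y \<omega> \<partial>M) = (\<integral>\<omega>. g \<omega> * Y \<omega> \<partial>M)"
  proof (rule integral_mult_fun_eq_of_indicator_eq[OF Y])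
    show "(\<lambda>\<omega>. of_bool (U \<omega>)) \<in> borel_measurable M" by measurable
  qed (use g_bounds bias in \<open>auto simp: measurable_restrict_space1\<close>)
  moreover have "(\<integral>\<omega>. (if U \<omega> then 1 else -1) * Y \<omega> \<partial>M) = (\<integral>\<omega>. 2 * (of_bool (U \<omega>) * Y \<omega>) - Y \<omega> \<partial>M)"
    by (intro Bochner_Integration.integral_cong) auto
  moreover have "(\<integral>\<omega>. (2 * g \<omega> - 1) * Y \<omega> \<partial>M) = (\<integral>\<omega>. 2 * (g \<omega> * Y \<omega>) - Y \<omega> \<partial>M)"
    by (intro Bochner_Integration.integral_cong) (auto simp: algebra_simps)
  ultimately show ?thesis using int_Y' int_uY int_gY by simp
qed

lemma (in prob_space) integral_indicator_eq_cond_prob_of_markov: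
  fixes U :: "'a \<Rightarrow> bool" and L T V :: "'a \<Rightarrow> real"
  assumes U: "U \<in> M \<rightarrow>\<^sub>M count_space UNIV"
    and h: "is_cond_prob M nonneg_reals T U h" and T: "T \<in> M \<rightarrow>\<^sub>M nonneg_reals"
    and markov: "markov_chain4 M (\<Pi>\<^sub>M t\<in>space nonneg_reals. borel)
      (\<lambda>\<omega>. restrict (\<lambda>t. (if U \<omega> then 1 else -1) * t) (space nonneg_reals)) nonneg_reals L nonneg_reals T nonneg_reals V"
    and B: "B \<in> sets nonneg_reals"
  shows "(\<integral>\<omega>. of_bool (U \<omega>) * indicator B (V \<omega>) \<partial>M) = (\<integral>\<omega>. h (T \<omega>) * indicator B (V \<omega>) \<partial>M)"
proof -
  let ?PX = "\<Pi>\<^sub>M t\<in>space nonneg_reals. (borel :: real measure)"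
  let ?X = "\<lambda>\<omega>. (restrict (\<lambda>t. (if U \<omega> then 1 else -1) * t) (space nonneg_reals), L \<omega>)"
  have ci: "cond_indep M (?PX \<Otimes>\<^sub>M nonneg_reals) ?X nonneg_reals V nonneg_reals T"
    using markov by (simp add: markov_chain4_def)
  have [measurable]: "h \<in> borel_measurable nonneg_reals" using h by (simp add: is_cond_prob_def)
  \<comment> \<open>the process evaluated at \<open>1\<close> is the sign, so \<open>{U}\<close> is an event of the pair (process, \<open>L\<close>)\<close>
  define A where "A = {x \<in> space ?PX. x 1 = 1} \<times> space nonneg_reals"
  have "(\<lambda>x. x 1) \<in> ?PX \<rightarrow>\<^sub>M borel" by (rule measurable_component_singleton) simp
  then have "{x \<in> space ?PX. x 1 = 1} \<in> sets ?PX" by measurable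
  then have A_sets: "A \<in> sets (?PX \<Otimes>\<^sub>M nonneg_reals)" unfolding A_def by (intro pair_measureI sets.top)
  have X_meas: "?X \<in> M \<rightarrow>\<^sub>M ?PX \<Otimes>\<^sub>M nonneg_reals" using ci by (simp add: cond_indep_def)
  have A_U: "indicator A (?X \<omega>) = of_bool (U \<omega>)" if "\<omega> \<in> space M" for \<omega>
    using measurable_space[OF X_meas that] by (auto simp: A_def space_pair_measure indicator_def)
  show ?thesis
    by (rule integral_mult_indicator_eq_of_cond_indep[OF ci A_sets B A_U cond_exp_eq_cond_prob[OF h T U]])
      (use T in measurable)
qed

lemma (in prob_space) sign_increment_le_ennsqrt:
  fixes U :: "'a \<Rightarrow> bool" and L T V :: "'a \<Rightarrow> real"
  assumes U: "U \<in> M \<rightarrow>\<^sub>M count_space UNIV"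
    and fair: "emeasure M {\<omega>\<in>space M. U \<omega>} = ennreal (1/2)"
    and T: "T \<in> M \<rightarrow>\<^sub>M nonneg_reals" and V: "V \<in> M \<rightarrow>\<^sub>M nonneg_reals"
    and int_T: "integrable M (\<lambda>\<omega>. (if U \<omega> then 1 else -1) * T \<omega>)"
    and int_V: "integrable M (\<lambda>\<omega>. (if U \<omega> then 1 else -1) * V \<omega>)"
    and markov: "markov_chain4 M (\<Pi>\<^sub>M t\<in>space nonneg_reals. borel)
      (\<lambda>\<omega>. restrict (\<lambda>t. (if U \<omega> then 1 else -1) * t) (space nonneg_reals)) nonneg_reals L nonneg_reals T nonneg_reals V"
  shows "ereal ((\<integral>\<omega>. (if U \<omega> then 1 else -1) * T \<omega> \<partial>M) - (\<integral>\<omega>. (if U \<omega> then 1 else -1) * V \<omega> \<partial>M))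
     \<le> enn2ereal (ennsqrt (2 * (\<integral>\<^sup>+\<omega>. ennreal ((T \<omega> - V \<omega>)\<^sup>2) \<partial>M)
           * ennreal (mutual_information (exp 1) nonneg_reals (count_space UNIV) T U)))"
proof -
  let ?\<epsilon> = "\<lambda>\<omega>. if U \<omega> then 1 else -1 :: real"
  let ?I = "mutual_information (exp 1) nonneg_reals (count_space UNIV) T U"
  let ?D2 = "\<integral>\<^sup>+\<omega>. ennreal ((T \<omega> - V \<omega>)\<^sup>2) \<partial>M"
  have [measurable]: "T \<in> borel_measurable M" "V \<in> borel_measurable M"
    using T V by (auto simp: measurable_restrict_space2_iff)
  obtain h where h: "is_cond_prob M nonneg_reals T U h" using is_cond_prob_exists[OF T U] by blast
  define a where "a \<omega> = 2 * h (T \<omega>) - 1" for \<omega>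
  have [measurable]: "h \<in> borel_measurable nonneg_reals" using h by (simp add: is_cond_prob_def)
  have [measurable]: "a \<in> borel_measurable M" unfolding a_def using T by measurable
  have hT_bounds: "0 \<le> h (T \<omega>) \<and> h (T \<omega>) \<le> 1" if "\<omega> \<in> space M" for \<omega>
    using h measurable_space[OF T that] by (auto simp: is_cond_prob_def)
  have a_bound: "\<bar>a \<omega>\<bar> \<le> 1" if "\<omega> \<in> space M" for \<omega>
    using hT_bounds[OF that] by (auto simp: a_def)
  have sign_eq: "(\<integral>\<omega>. ?\<epsilon> \<omega> * Y \<omega> \<partial>M) = (\<integral>\<omega>. a \<omega> * Y \<omega> \<partial>M)"
    if "Y \<in> M \<rightarrow>\<^sub>M nonneg_reals" "integrable M (\<lambda>\<omega>. ?\<epsilon> \<omega> * Y \<omega>)"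
      "\<And>B. B \<in> sets nonneg_reals \<Longrightarrow>
         (\<integral>\<omega>. of_bool (U \<omega>) * indicator B (Y \<omega>) \<partial>M) = (\<integral>\<omega>. h (T \<omega>) * indicator B (Y \<omega>) \<partial>M)" for Y
    unfolding a_def using T by (intro integral_sign_eq_integral_bias[OF U _ hT_bounds that]) measurable
  have int_a: "integrable M (\<lambda>\<omega>. a \<omega> * Y \<omega>)" if "integrable M Y" "Y \<in> borel_measurable M" for Y
    using that a_bound
    by (auto intro!: AE_I2 Bochner_Integration.integrable_bound[OF \<open>integrable M Y\<close>] mult_left_le_one_le
      simp: abs_mult)
  have int_T': "integrable M T" by (rule Bochner_Integration.integrable_bound[OF int_T]) (auto intro!: AE_I2)
  have int_V': "integrable M V" by (rule Bochner_Integration.integrable_bound[OF int_V]) (auto intro!: AE_I2)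
  have "(\<integral>\<^sup>+\<omega>. ennreal ((a \<omega>)\<^sup>2) \<partial>M) * ?D2 \<le> 2 * ennreal ?I * ?D2"
    unfolding a_def by (intro mult_right_mono nn_integral_bias_sq_le_mutual_information[OF h T U fair]) simp
  then have sqrt_le: "ennsqrt ((\<integral>\<^sup>+\<omega>. ennreal ((a \<omega>)\<^sup>2) \<partial>M) * ?D2) \<le> ennsqrt (2 * ?D2 * ennreal ?I)"
    by (intro ennsqrt_mono) (simp add: ac_simps)
  have "(\<integral>\<omega>. ?\<epsilon> \<omega> * T \<omega> \<partial>M) - (\<integral>\<omega>. ?\<epsilon> \<omega> * V \<omega> \<partial>M) = (\<integral>\<omega>. a \<omega> * (T \<omega> - V \<omega>) \<partial>M)"
    using sign_eq[OF T int_T integral_indicator_eq_cond_prob[OF h T U]]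
      sign_eq[OF V int_V integral_indicator_eq_cond_prob_of_markov[OF U h T markov]]
      int_a[OF int_T'] int_a[OF int_V']
    by (simp add: right_diff_distrib)
  also have "ereal \<dots> \<le> enn2ereal (ennsqrt ((\<integral>\<^sup>+\<omega>. ennreal ((a \<omega>)\<^sup>2) \<partial>M) * ?D2))"
    using int_a[of "\<lambda>\<omega>. T \<omega> - V \<omega>"] int_T' int_V' by (intro integral_mult_le_ennsqrt) auto
  also have "\<dots> \<le> enn2ereal (ennsqrt (2 * ?D2 * ennreal ?I))"
    using sqrt_le by (simp add: less_eq_ennreal.rep_eq)
  finally show ?thesis .
qed

lemma (in prob_space) stochastic_chain_sign_bound:
  fixes U :: "'a \<Rightarrow> bool" and L :: "'a \<Rightarrow> real" and Lc :: "nat \<Rightarrow> 'a \<Rightarrow> real"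
  assumes [measurable]: "U \<in> M \<rightarrow>\<^sub>M count_space UNIV"
    and fair: "emeasure M {\<omega>\<in>space M. U \<omega>} = ennreal (1/2)"
    and chain: "stochastic_chain M nonneg_reals (\<lambda>l \<omega>. (if U \<omega> then 1 else -1) * l) L Lc k0"
  shows "ereal (\<integral>\<omega>. (if U \<omega> then 1 else -1) * L \<omega> \<partial>M)
    \<le> enn2ereal (\<Sum>k. ennsqrt (2 * (\<integral>\<^sup>+\<omega>. ennreal ((Lc (k0 + k + 1) \<omega> - Lc (k0 + k) \<omega>)\<^sup>2) \<partial>M)
          * ennreal (mutual_information (exp 1) nonneg_reals (count_space UNIV) (Lc (k0 + k + 1)) U)))"
proof (rule limit_le_suminf_of_increments_le)
  let ?E = "\<lambda>k. \<integral>\<omega>. (if U \<omega> then 1 else -1) * Lc (k0 + k) \<omega> \<partial>M"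
  show "?E \<longlonglongrightarrow> (\<integral>\<omega>. (if U \<omega> then 1 else -1) * L \<omega> \<partial>M)" and "?E 0 = 0"
    using chain by (simp_all add: stochastic_chain_def)
  fix k
  have Lc: "Lc j \<in> M \<rightarrow>\<^sub>M nonneg_reals" "integrable M (\<lambda>\<omega>. (if U \<omega> then 1 else -1) * Lc j \<omega>)"
    if "k0 \<le> j" for j
    using chain that by (auto simp: stochastic_chain_def)
  have "\<forall>j>k0. markov_chain4 M (\<Pi>\<^sub>M t\<in>space nonneg_reals. borel)
      (\<lambda>\<omega>. restrict (\<lambda>t. (if U \<omega> then 1 else -1) * t) (space nonneg_reals))
      nonneg_reals L nonneg_reals (Lc j) nonneg_reals (Lc (j - 1))"
    using chain by (simp add: stochastic_chain_def)
  from this[rule_format, of "k0 + k + 1"] show "ereal (?E (Suc k) - ?E k)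
    \<le> enn2ereal (ennsqrt (2 * (\<integral>\<^sup>+\<omega>. ennreal ((Lc (k0 + k + 1) \<omega> - Lc (k0 + k) \<omega>)\<^sup>2) \<partial>M)
          * ennreal (mutual_information (exp 1) nonneg_reals (count_space UNIV) (Lc (k0 + k + 1)) U)))"
    using sign_increment_le_ennsqrt[OF assms(1) fair Lc(1) Lc(1) Lc(2) Lc(2)] by simp
qed

section \<open>The supersample setting\<close>

lemma distr_Not_fair_coin:
  "distr (measure_pmf (pmf_of_set UNIV)) (measure_pmf (pmf_of_set UNIV)) Not = measure_pmf (pmf_of_set UNIV)"
proof -
  have "distr (measure_pmf (pmf_of_set UNIV)) (measure_pmf (pmf_of_set UNIV)) Not
      = distr (measure_pmf (pmf_of_set UNIV)) (count_space UNIV) Not"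
    by (rule distr_cong) auto
  also have "\<dots> = measure_pmf (map_pmf Not (pmf_of_set UNIV))"
    by (simp add: map_pmf_rep_eq)
  also have "range Not = UNIV" by (rule surjI[of Not Not]) simp
  then have "map_pmf Not (pmf_of_set UNIV) = pmf_of_set UNIV"
    by (subst map_pmf_of_set_inj) (auto simp: inj_on_def)
  finally show ?thesis .
qed

lemma integral_eq_twice_of_nn_integral_eq:
  fixes f g :: "'a \<Rightarrow> real"
  assumes [measurable]: "f \<in> borel_measurable M" "g \<in> borel_measurable M"
    and nonneg: "\<And>\<omega>. \<omega> \<in> space M \<Longrightarrow> 0 \<le> f \<omega>" "\<And>\<omega>. \<omega> \<in> space M \<Longrightarrow> 0 \<le> g \<omega>"
    and int_g: "integrable M g"
    and eq: "(\<integral>\<^sup>+\<omega>. ennreal (f \<omega>) \<partial>M) = 2 * (\<integral>\<^sup>+\<omega>. ennreal (g \<omega>) \<partial>M)"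
  shows "integrable M f" "(\<integral>\<omega>. f \<omega> \<partial>M) = 2 * (\<integral>\<omega>. g \<omega> \<partial>M)"
proof -
  have g_nn: "(\<integral>\<^sup>+\<omega>. ennreal (g \<omega>) \<partial>M) = ennreal (\<integral>\<omega>. g \<omega> \<partial>M)"
    using nonneg(2) by (intro nn_integral_eq_integral int_g) auto
  then show "integrable M f"
    using nonneg(1) eq by (intro integrableI_nonneg) (auto simp: ennreal_mult_less_top)
  show "(\<integral>\<omega>. f \<omega> \<partial>M) = 2 * (\<integral>\<omega>. g \<omega> \<partial>M)"
    using nonneg g_nn eq by (simp add: integral_eq_nn_integral enn2real_mult integral_nonneg_AE)
qed

locale supersample =
  fixes M :: "'a measure"
    and \<mu> :: "'z measure"
    and Wsp :: "'w measure"
    and Rsp :: "'r measure"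
    and n :: nat
    and Z :: "nat \<Rightarrow> bool \<Rightarrow> 'a \<Rightarrow> 'z"
    and U :: "nat \<Rightarrow> 'a \<Rightarrow> bool"
    and R :: "'a \<Rightarrow> 'r"
    and \<A> :: "(nat \<Rightarrow> 'z) \<Rightarrow> 'r \<Rightarrow> 'w"
    and W :: "'a \<Rightarrow> 'w"
    and loss :: "'w \<Rightarrow> 'z \<Rightarrow> real"
  assumes M: "prob_space M"
    and mu: "prob_space \<mu>"
    and n: "n \<ge> 1"
    and loss_nonneg: "\<And>w z. loss w z \<ge> 0"
    and loss_meas: "(\<lambda>(w, z). loss w z) \<in> Wsp \<Otimes>\<^sub>M \<mu> \<rightarrow>\<^sub>M borel"
    and A_meas: "(\<lambda>(s, r). \<A> s r) \<in> (\<Pi>\<^sub>M i\<in>{1..n}. \<mu>) \<Otimes>\<^sub>M Rsp \<rightarrow>\<^sub>M Wsp"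
    and Z_meas: "\<And>i j. i \<in> {1..n} \<Longrightarrow> Z i j \<in> M \<rightarrow>\<^sub>M \<mu>"
    and U_meas: "\<And>i. i \<in> {1..n} \<Longrightarrow> U i \<in> M \<rightarrow>\<^sub>M count_space UNIV"
    and R_meas: "R \<in> M \<rightarrow>\<^sub>M Rsp"
    and joint_law:
      "distr M ((\<Pi>\<^sub>M p\<in>{1..n} \<times> UNIV. \<mu>) \<Otimes>\<^sub>M (\<Pi>\<^sub>M i\<in>{1..n}. measure_pmf (pmf_of_set UNIV)) \<Otimes>\<^sub>M Rsp)
         (\<lambda>\<omega>. (restrict (\<lambda>p. Z (fst p) (snd p) \<omega>) ({1..n} \<times> UNIV),
                restrict (\<lambda>i. U i \<omega>) {1..n}, R \<omega>))
       = (\<Pi>\<^sub>M p\<in>{1..n} \<times> UNIV. \<mu>) \<Otimes>\<^sub>M (\<Pi>\<^sub>M i\<in>{1..n}. measure_pmf (pmf_of_set UNIV))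
           \<Otimes>\<^sub>M distr M Rsp R"
    and W_def: "\<And>\<omega>. \<omega> \<in> space M \<Longrightarrow>
                  W \<omega> = \<A> (restrict (\<lambda>i. Z i (U i \<omega>) \<omega>) {1..n}) (R \<omega>)"
begin

abbreviation "idx \<equiv> {1..n}"
abbreviation "slots \<equiv> {1..n} \<times> (UNIV :: bool set)"
abbreviation "Zspace \<equiv> \<Pi>\<^sub>M p\<in>slots. \<mu>"
abbreviation "coin \<equiv> measure_pmf (pmf_of_set (UNIV :: bool set))"
abbreviation "Uspace \<equiv> \<Pi>\<^sub>M i\<in>idx. coin"
abbreviation "Rlaw \<equiv> distr M Rsp R"
abbreviation "\<Omega> \<equiv> Zspace \<Otimes>\<^sub>M Uspace \<Otimes>\<^sub>M Rlaw"

text \<open>The canonical space \<open>\<Omega>\<close> carries the supersample, the mask and the internal randomness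
  of the algorithm; \<open>sample i b x\<close> is \<open>Z i b\<close> and \<open>mask i x\<close> is \<open>U i\<close> read off a point \<open>x\<close> of \<open>\<Omega>\<close>.\<close>
abbreviation sample :: "nat \<Rightarrow> bool \<Rightarrow> (nat \<times> bool \<Rightarrow> 'z) \<times> (nat \<Rightarrow> bool) \<times> 'r \<Rightarrow> 'z" where
  "sample i b x \<equiv> fst x (i, b)"
abbreviation mask :: "nat \<Rightarrow> (nat \<times> bool \<Rightarrow> 'z) \<times> (nat \<Rightarrow> bool) \<times> 'r \<Rightarrow> bool" where
  "mask i x \<equiv> fst (snd x) i"

definition coords where
  "coords \<omega> = (restrict (\<lambda>p. Z (fst p) (snd p) \<omega>) slots, restrict (\<lambda>i. U i \<omega>) idx, R \<omega>)"

definition learner where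
  "learner x = \<A> (restrict (\<lambda>i. sample i (mask i x) x) idx) (snd (snd x))"

definition risk where
  "risk w = (\<integral>\<^sup>+z. ennreal (loss w z) \<partial>\<mu>)"

lemma prob_space_Zspace: "prob_space Zspace" by (intro prob_space_PiM mu)
lemma prob_space_Uspace: "prob_space Uspace" by (intro prob_space_PiM prob_space_measure_pmf)
lemma prob_space_Rlaw: "prob_space Rlaw" by (rule prob_space.prob_space_distr[OF M R_meas])

lemma measurable_sample[measurable]: "i \<in> idx \<Longrightarrow> sample i b \<in> \<Omega> \<rightarrow>\<^sub>M \<mu>"
  by (rule measurable_compose[OF measurable_fst measurable_component_singleton]) auto

lemma measurable_mask[measurable]: "i \<in> idx \<Longrightarrow> mask i \<in> \<Omega> \<rightarrow>\<^sub>M count_space UNIV"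
  using measurable_compose[OF measurable_compose[OF measurable_snd measurable_fst]
      measurable_component_singleton[of i idx "\<lambda>_. coin"]]
  by (simp add: comp_def measurable_cong_sets[OF refl sets_measure_pmf_count_space])

lemma measurable_loss[measurable (raw)]:
  "f \<in> N \<rightarrow>\<^sub>M Wsp \<Longrightarrow> g \<in> N \<rightarrow>\<^sub>M \<mu> \<Longrightarrow> (\<lambda>x. loss (f x) (g x)) \<in> borel_measurable N"
  using measurable_compose[OF measurable_Pair loss_meas] by (simp add: comp_def)

lemma measurable_risk[measurable]: "risk \<in> borel_measurable Wsp"
proof -
  interpret \<mu>: prob_space \<mu> by (rule mu)
  have "(\<lambda>(w, z). ennreal (loss w z)) \<in> borel_measurable (Wsp \<Otimes>\<^sub>M \<mu>)"
    using measurable_compose[OF loss_meas measurable_ennreal] by (simp add: comp_def case_prod_beta)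
  then show ?thesis unfolding risk_def by (rule \<mu>.borel_measurable_nn_integral)
qed

lemma measurable_coords[measurable]: "coords \<in> M \<rightarrow>\<^sub>M \<Omega>"
proof -
  have "(\<lambda>\<omega>. restrict (\<lambda>p. Z (fst p) (snd p) \<omega>) slots) \<in> M \<rightarrow>\<^sub>M Zspace"
    by (rule measurable_restrict) (auto intro: Z_meas)
  moreover have "(\<lambda>\<omega>. restrict (\<lambda>i. U i \<omega>) idx) \<in> M \<rightarrow>\<^sub>M Uspace"
    by (rule measurable_restrict) (auto intro: U_meas simp: measurable_cong_sets[OF refl sets_measure_pmf_count_space])
  moreover have "R \<in> M \<rightarrow>\<^sub>M Rlaw" using R_meas by (simp add: measurable_cong_sets[OF refl sets_distr])
  ultimately show ?thesis unfolding coords_def by (intro measurable_Pair) auto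
qed

lemma distr_coords: "distr M \<Omega> coords = \<Omega>"
proof -
  have "distr M \<Omega> coords = distr M (Zspace \<Otimes>\<^sub>M Uspace \<Otimes>\<^sub>M Rsp) coords"
    by (rule distr_cong[OF refl sets_pair_measure_cong[OF refl sets_pair_measure_cong[OF refl sets_distr]] refl])
  also have "\<dots> = \<Omega>" using joint_law unfolding coords_def .
  finally show ?thesis .
qed

lemma nn_integral_coords:
  assumes [measurable]: "g \<in> borel_measurable \<Omega>"
  shows "(\<integral>\<^sup>+\<omega>. g (coords \<omega>) \<partial>M) = (\<integral>\<^sup>+x. g x \<partial>\<Omega>)"
proof -
  have "integral\<^sup>N (distr M \<Omega> coords) g = (\<integral>\<^sup>+\<omega>. g (coords \<omega>) \<partial>M)"
    by (rule nn_integral_distr[OF measurable_coords]) (unfold distr_coords, rule assms)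
  then show ?thesis unfolding distr_coords by simp
qed

lemma measurable_selected_sample[measurable]: "i \<in> idx \<Longrightarrow> (\<lambda>x. sample i (mask i x) x) \<in> \<Omega> \<rightarrow>\<^sub>M \<mu>"
proof -
  have "(\<lambda>x. sample i (mask i x) x) = (\<lambda>x. if mask i x then sample i True x else sample i False x)"
    by (auto simp: fun_eq_iff)
  also have "i \<in> idx \<Longrightarrow> \<dots> \<in> \<Omega> \<rightarrow>\<^sub>M \<mu>" by measurable
  finally show "i \<in> idx \<Longrightarrow> (\<lambda>x. sample i (mask i x) x) \<in> \<Omega> \<rightarrow>\<^sub>M \<mu>" .
qed

lemma measurable_learner[measurable]: "learner \<in> \<Omega> \<rightarrow>\<^sub>M Wsp"
proof -
  have "(\<lambda>x. (restrict (\<lambda>i. sample i (mask i x) x) idx, snd (snd x))) \<in> \<Omega> \<rightarrow>\<^sub>M (\<Pi>\<^sub>M i\<in>idx. \<mu>) \<Otimes>\<^sub>M Rsp"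
    by (intro measurable_Pair measurable_restrict measurable_selected_sample)
      (simp_all add: measurable_cong_sets[OF refl sets_distr])
  from measurable_compose[OF this A_meas] show ?thesis unfolding learner_def by (simp add: comp_def)
qed

lemma coords_space: "\<omega> \<in> space M \<Longrightarrow> coords \<omega> \<in> space \<Omega>"
  using measurable_space[OF measurable_coords] .

lemma sample_coords[simp]: "i \<in> idx \<Longrightarrow> sample i b (coords \<omega>) = Z i b \<omega>"
  by (simp add: coords_def)

lemma mask_coords[simp]: "i \<in> idx \<Longrightarrow> mask i (coords \<omega>) = U i \<omega>"
  by (simp add: coords_def)

lemma learner_coords: "\<omega> \<in> space M \<Longrightarrow> learner (coords \<omega>) = W \<omega>"
  by (simp add: W_def learner_def coords_def cong: restrict_cong)

lemma measurable_W[measurable]: "W \<in> M \<rightarrow>\<^sub>M Wsp"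
proof -
  have "(\<lambda>\<omega>. learner (coords \<omega>)) \<in> M \<rightarrow>\<^sub>M Wsp" by measurable
  then show ?thesis by (rule measurable_cong[THEN iffD1, rotated]) (simp add: learner_coords)
qed

text \<open>Swapping the two columns of the supersample and negating the mask preserves the law of \<open>\<Omega>\<close>
  and the learned hypothesis.\<close>
definition flip_Z :: "(nat \<times> bool \<Rightarrow> 'z) \<Rightarrow> (nat \<times> bool \<Rightarrow> 'z)" where
  "flip_Z z = restrict (\<lambda>p. z (fst p, \<not> snd p)) slots"

definition flip_U :: "(nat \<Rightarrow> bool) \<Rightarrow> (nat \<Rightarrow> bool)" where
  "flip_U u = restrict (\<lambda>i. \<not> u i) idx"

definition flip where
  "flip x = (flip_Z (fst x), flip_U (fst (snd x)), snd (snd x))"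

lemma measurable_flip_Z[measurable]: "flip_Z \<in> Zspace \<rightarrow>\<^sub>M Zspace"
  unfolding flip_Z_def by (rule measurable_restrict) (auto intro!: measurable_component_singleton)

lemma measurable_flip_U[measurable]: "flip_U \<in> Uspace \<rightarrow>\<^sub>M Uspace"
  unfolding flip_U_def
proof (rule measurable_restrict)
  fix i assume "i \<in> idx"
  then have "(\<lambda>u. u i) \<in> Uspace \<rightarrow>\<^sub>M count_space UNIV"
    using measurable_component_singleton[of i idx "\<lambda>_. coin"]
    by (simp add: measurable_cong_sets[OF refl sets_measure_pmf_count_space])
  then show "(\<lambda>u. \<not> u i) \<in> Uspace \<rightarrow>\<^sub>M coin"
    by (simp add: measurable_cong_sets[OF refl sets_measure_pmf_count_space])
qed

lemma measurable_flip[measurable]: "flip \<in> \<Omega> \<rightarrow>\<^sub>M \<Omega>"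
  unfolding flip_def by measurable

lemma distr_flip_Z: "distr Zspace Zspace flip_Z = Zspace"
proof -
  have "inj_on (\<lambda>p. (fst p, \<not> snd p)) slots" by (auto simp: inj_on_def)
  moreover have "(\<lambda>p. (fst p, \<not> snd p)) \<in> slots \<rightarrow> slots" by auto
  ultimately show ?thesis
    unfolding flip_Z_def using distr_PiM_reindex[of slots "\<lambda>_. \<mu>" "\<lambda>p. (fst p, \<not> snd p)" slots, OF mu]
    by simp
qed

lemma distr_flip_U: "distr Uspace Uspace flip_U = Uspace"
proof -
  have "flip_U = compose idx Not" by (auto simp: fun_eq_iff flip_U_def compose_def)
  moreover have "distr Uspace Uspace (compose idx Not) = (\<Pi>\<^sub>M i\<in>idx. distr coin coin Not)"
    by (rule distr_PiM_finite_prob_space')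
      (auto simp: prob_space_measure_pmf measurable_cong_sets[OF sets_measure_pmf_count_space refl])
  ultimately show ?thesis by (simp add: distr_Not_fair_coin)
qed

lemma distr_flip: "distr \<Omega> \<Omega> flip = \<Omega>"
proof -
  interpret U: prob_space Uspace by (rule prob_space_Uspace)
  interpret R: prob_space Rlaw by (rule prob_space_Rlaw)
  interpret UR: pair_prob_space Uspace Rlaw ..
  let ?g = "\<lambda>(u, r). (flip_U u, r)"
  have "Uspace \<Otimes>\<^sub>M Rlaw = distr Uspace Uspace flip_U \<Otimes>\<^sub>M distr Rlaw Rlaw (\<lambda>r. r)"
    by (simp only: distr_flip_U distr_id)
  also have "\<dots> = distr (Uspace \<Otimes>\<^sub>M Rlaw) (Uspace \<Otimes>\<^sub>M Rlaw) ?g"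
    by (rule pair_measure_distr[OF measurable_flip_U measurable_ident_sets[OF refl]])
      (unfold distr_id, rule R.sigma_finite_measure_axioms)
  finally have distr_g: "distr (Uspace \<Otimes>\<^sub>M Rlaw) (Uspace \<Otimes>\<^sub>M Rlaw) ?g = Uspace \<Otimes>\<^sub>M Rlaw" by simp
  have "\<Omega> = distr Zspace Zspace flip_Z \<Otimes>\<^sub>M distr (Uspace \<Otimes>\<^sub>M Rlaw) (Uspace \<Otimes>\<^sub>M Rlaw) ?g"
    by (simp only: distr_flip_Z distr_g)
  also have "\<dots> = distr \<Omega> \<Omega> (\<lambda>(z, q). (flip_Z z, ?g q))"
  proof (rule pair_measure_distr[OF measurable_flip_Z])
    show "?g \<in> Uspace \<Otimes>\<^sub>M Rlaw \<rightarrow>\<^sub>M Uspace \<Otimes>\<^sub>M Rlaw" by measurable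
    show "sigma_finite_measure (distr (Uspace \<Otimes>\<^sub>M Rlaw) (Uspace \<Otimes>\<^sub>M Rlaw) ?g)"
      unfolding distr_g by (rule UR.sigma_finite_measure_axioms)
  qed
  also have "(\<lambda>(z, q). (flip_Z z, ?g q)) = flip"
    by (auto simp: flip_def fun_eq_iff)
  finally show ?thesis by simp
qed

lemma nn_integral_flip:
  assumes [measurable]: "g \<in> borel_measurable \<Omega>"
  shows "(\<integral>\<^sup>+x. g (flip x) \<partial>\<Omega>) = (\<integral>\<^sup>+x. g x \<partial>\<Omega>)"
proof -
  have "integral\<^sup>N (distr \<Omega> \<Omega> flip) g = (\<integral>\<^sup>+x. g (flip x) \<partial>\<Omega>)"
    by (rule nn_integral_distr[OF measurable_flip]) (unfold distr_flip, rule assms)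
  then show ?thesis unfolding distr_flip by simp
qed

lemma learner_flip: "x \<in> space \<Omega> \<Longrightarrow> learner (flip x) = learner x"
  by (auto simp: learner_def flip_def flip_Z_def flip_U_def space_pair_measure cong: restrict_cong)

lemma sample_flip[simp]: "i \<in> idx \<Longrightarrow> sample i b (flip x) = sample i (\<not> b) x"
  by (simp add: flip_def flip_Z_def)

lemma mask_flip[simp]: "i \<in> idx \<Longrightarrow> mask i (flip x) = (\<not> mask i x)"
  by (simp add: flip_def flip_U_def)

lemma learner_update_unused:
  "i \<in> idx \<Longrightarrow> \<not> u i \<Longrightarrow> learner (z((i, True) := y), u, r) = learner (z, u, r)"
  by (simp add: learner_def) (rule arg_cong[where f="\<lambda>s. \<A> s r"], rule restrict_ext, auto)

lemma nn_integral_eq_twice_unmasked: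
  assumes i: "i \<in> idx" and [measurable]: "f \<in> borel_measurable \<Omega>"
    and flip_invariant: "\<And>x. x \<in> space \<Omega> \<Longrightarrow> \<not> mask i x \<Longrightarrow> f (flip x) = f x"
  shows "(\<integral>\<^sup>+x. f x \<partial>\<Omega>) = 2 * (\<integral>\<^sup>+x. (if mask i x then 0 else f x) \<partial>\<Omega>)"
proof -
  have "(\<integral>\<^sup>+x. f x \<partial>\<Omega>) = (\<integral>\<^sup>+x. (if mask i x then f x else 0) + (if mask i x then 0 else f x) \<partial>\<Omega>)"
    by (intro nn_integral_cong) simp
  also have "\<dots> = (\<integral>\<^sup>+x. (if mask i x then f x else 0) \<partial>\<Omega>) + (\<integral>\<^sup>+x. (if mask i x then 0 else f x) \<partial>\<Omega>)"
    using i by (intro nn_integral_add) measurable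
  also have "(\<integral>\<^sup>+x. (if mask i x then f x else 0) \<partial>\<Omega>) = (\<integral>\<^sup>+x. (if mask i (flip x) then f (flip x) else 0) \<partial>\<Omega>)"
    using i by (intro nn_integral_flip[symmetric]) measurable
  also have "\<dots> = (\<integral>\<^sup>+x. (if mask i x then 0 else f x) \<partial>\<Omega>)"
    using i flip_invariant by (intro nn_integral_cong) simp
  finally show ?thesis by (simp add: mult_2)
qed

text \<open>If \<open>U i\<close> is false then \<open>Z i True\<close> is a test point: the learner does not see it, so integrating
  it out turns its loss into the population risk.\<close>
lemma nn_integral_test_slot:
  assumes i: "i \<in> idx" and q: "q \<in> space (Uspace \<Otimes>\<^sub>M Rlaw)" and unmasked: "\<not> fst q i"
  shows "(\<integral>\<^sup>+z. ennreal (loss (learner (z, q)) (z (i, True))) \<partial>Zspace) = (\<integral>\<^sup>+z. risk (learner (z, q)) \<partial>Zspace)"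
proof -
  interpret \<mu>: prob_space \<mu> by (rule mu)
  interpret P: product_prob_space "\<lambda>_. \<mu>" by unfold_locales
  define f where "f x = ennreal (loss (learner x) (sample i True x))" for x
  define g where "g x = risk (learner x)" for x
  have [measurable]: "f \<in> borel_measurable \<Omega>" "g \<in> borel_measurable \<Omega>"
    using i unfolding f_def g_def by measurable
  define J where "J = slots - {(i, True)}"
  have slots: "slots = insert (i, True) J" "(i, True) \<notin> J" "finite J" using i by (auto simp: J_def)
  obtain u r where q_eq: "q = (u, r)" by (cases q)
  have meas: "(\<lambda>z. h (z, q)) \<in> borel_measurable (Pi\<^sub>M (insert (i, True) J) (\<lambda>_. \<mu>))"
    if "h \<in> borel_measurable \<Omega>" for h
    using measurable_compose[OF measurable_Pair2'[OF q] that] unfolding slots(1)[symmetric]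
    by (simp add: comp_def)
  have "(\<integral>\<^sup>+z. f (z, q) \<partial>Zspace) = (\<integral>\<^sup>+z. (\<integral>\<^sup>+y. f (z((i, True) := y), q) \<partial>\<mu>) \<partial>Pi\<^sub>M J (\<lambda>_. \<mu>))"
    unfolding slots(1) by (rule P.product_nn_integral_insert[OF slots(3,2) meas]) measurable
  also have "\<dots> = (\<integral>\<^sup>+z. risk (learner (z, q)) \<partial>Pi\<^sub>M J (\<lambda>_. \<mu>))"
    using unmasked i by (intro nn_integral_cong) (simp add: f_def risk_def q_eq learner_update_unused)
  also have "\<dots> = (\<integral>\<^sup>+z. (\<integral>\<^sup>+y. g (z((i, True) := y), q) \<partial>\<mu>) \<partial>Pi\<^sub>M J (\<lambda>_. \<mu>))"
    using unmasked i
    by (intro nn_integral_cong) (simp add: g_def q_eq learner_update_unused \<mu>.emeasure_space_1)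
  also have "\<dots> = (\<integral>\<^sup>+z. g (z, q) \<partial>Zspace)"
    unfolding slots(1) by (rule P.product_nn_integral_insert[OF slots(3,2) meas, symmetric]) measurable
  finally show ?thesis unfolding f_def g_def by simp
qed

lemma nn_integral_unmasked_test_loss:
  assumes i: "i \<in> idx"
  shows "(\<integral>\<^sup>+x. (if mask i x then 0 else ennreal (loss (learner x) (sample i True x))) \<partial>\<Omega>)
       = (\<integral>\<^sup>+x. (if mask i x then 0 else risk (learner x)) \<partial>\<Omega>)"
proof -
  interpret U: prob_space Uspace by (rule prob_space_Uspace)
  interpret R: prob_space Rlaw by (rule prob_space_Rlaw)
  interpret UR: pair_prob_space Uspace Rlaw ..
  interpret Z: prob_space Zspace by (rule prob_space_Zspace)
  interpret ZQ: pair_sigma_finite Zspace "Uspace \<Otimes>\<^sub>M Rlaw" ..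
  define f where "f x = (if mask i x then 0 else ennreal (loss (learner x) (sample i True x)))" for x
  define g where "g x = (if mask i x then 0 else risk (learner x))" for x
  have [measurable]: "f \<in> borel_measurable \<Omega>" "g \<in> borel_measurable \<Omega>"
    using i unfolding f_def g_def by measurable
  have inner: "(\<integral>\<^sup>+z. f (z, q) \<partial>Zspace) = (\<integral>\<^sup>+z. g (z, q) \<partial>Zspace)" if "q \<in> space (Uspace \<Otimes>\<^sub>M Rlaw)" for q
    using nn_integral_test_slot[OF i that] by (cases "fst q i") (simp_all add: f_def g_def)
  have "(\<integral>\<^sup>+x. f x \<partial>\<Omega>) = (\<integral>\<^sup>+q. (\<integral>\<^sup>+z. f (z, q) \<partial>Zspace) \<partial>(Uspace \<Otimes>\<^sub>M Rlaw))"
    by (rule ZQ.nn_integral_snd[symmetric]) measurable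
  also have "\<dots> = (\<integral>\<^sup>+q. (\<integral>\<^sup>+z. g (z, q) \<partial>Zspace) \<partial>(Uspace \<Otimes>\<^sub>M Rlaw))"
    by (rule nn_integral_cong) (rule inner)
  also have "\<dots> = (\<integral>\<^sup>+x. g x \<partial>\<Omega>)"
    by (rule ZQ.nn_integral_snd) measurable
  finally show ?thesis unfolding f_def g_def .
qed

lemma nn_integral_train_loss_canonical:
  assumes i: "i \<in> idx"
  shows "(\<integral>\<^sup>+x. ennreal (loss (learner x) (sample i (mask i x) x)) \<partial>\<Omega>)
       = 2 * (\<integral>\<^sup>+x. (if mask i x then 0 else ennreal (loss (learner x) (sample i False x))) \<partial>\<Omega>)"
proof -
  have "(\<integral>\<^sup>+x. ennreal (loss (learner x) (sample i (mask i x) x)) \<partial>\<Omega>)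
      = 2 * (\<integral>\<^sup>+x. (if mask i x then 0 else ennreal (loss (learner x) (sample i (mask i x) x))) \<partial>\<Omega>)"
    by (rule nn_integral_eq_twice_unmasked[OF i]) (use i in measurable, insert i, simp add: learner_flip)
  also have "\<dots> = 2 * (\<integral>\<^sup>+x. (if mask i x then 0 else ennreal (loss (learner x) (sample i False x))) \<partial>\<Omega>)"
    by (intro arg_cong[where f="(*) 2"] nn_integral_cong) simp
  finally show ?thesis .
qed

lemma nn_integral_risk_canonical:
  assumes i: "i \<in> idx"
  shows "(\<integral>\<^sup>+x. risk (learner x) \<partial>\<Omega>)
       = 2 * (\<integral>\<^sup>+x. (if mask i x then ennreal (loss (learner x) (sample i False x)) else 0) \<partial>\<Omega>)"
proof -
  have "(\<integral>\<^sup>+x. risk (learner x) \<partial>\<Omega>) = 2 * (\<integral>\<^sup>+x. (if mask i x then 0 else risk (learner x)) \<partial>\<Omega>)"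
    by (rule nn_integral_eq_twice_unmasked[OF i]) (measurable, simp add: learner_flip)
  also have "\<dots> = 2 * (\<integral>\<^sup>+x. (if mask i x then 0 else ennreal (loss (learner x) (sample i True x))) \<partial>\<Omega>)"
    using nn_integral_unmasked_test_loss[OF i] by simp
  also have "(\<integral>\<^sup>+x. (if mask i x then 0 else ennreal (loss (learner x) (sample i True x))) \<partial>\<Omega>)
      = (\<integral>\<^sup>+x. (if mask i (flip x) then 0 else ennreal (loss (learner (flip x)) (sample i True (flip x)))) \<partial>\<Omega>)"
    using i by (intro nn_integral_flip[symmetric]) measurable
  also have "\<dots> = (\<integral>\<^sup>+x. (if mask i x then ennreal (loss (learner x) (sample i False x)) else 0) \<partial>\<Omega>)"
    using i by (intro nn_integral_cong) (simp add: learner_flip)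
  finally show ?thesis .
qed

lemma prob_mask:
  assumes i: "i \<in> idx"
  shows "emeasure M {\<omega>\<in>space M. U i \<omega>} = ennreal (1/2)"
proof -
  interpret Z: prob_space Zspace by (rule prob_space_Zspace)
  interpret U: prob_space Uspace by (rule prob_space_Uspace)
  interpret R: prob_space Rlaw by (rule prob_space_Rlaw)
  interpret UR: pair_prob_space Uspace Rlaw ..
  interpret coins: product_prob_space "\<lambda>_. coin" idx by unfold_locales
  define B where "B = {u \<in> space Uspace. u i \<in> {True}}"
  have "(\<lambda>u. u i) \<in> Uspace \<rightarrow>\<^sub>M count_space UNIV"
    using measurable_component_singleton[OF i, of "\<lambda>_. coin"]
    by (simp add: measurable_cong_sets[OF refl sets_measure_pmf_count_space])
  moreover have "B = (\<lambda>u. u i) -` {True} \<inter> space Uspace" by (auto simp: B_def)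
  ultimately have B: "B \<in> sets Uspace" by (simp add: measurable_sets)
  have "{\<omega>\<in>space M. U i \<omega>} = coords -` (space Zspace \<times> (B \<times> space Rlaw)) \<inter> space M"
    using i coords_space by (auto simp: B_def space_pair_measure coords_def)
  moreover have "space Zspace \<times> (B \<times> space Rlaw) \<in> sets \<Omega>"
    using B by (intro pair_measureI sets.top)
  ultimately have "emeasure M {\<omega>\<in>space M. U i \<omega>} = emeasure (distr M \<Omega> coords) (space Zspace \<times> (B \<times> space Rlaw))"
    by (simp only: emeasure_distr[OF measurable_coords])
  also have "\<dots> = emeasure \<Omega> (space Zspace \<times> (B \<times> space Rlaw))"
    unfolding distr_coords ..
  also have "\<dots> = emeasure Zspace (space Zspace) * (emeasure Uspace B * emeasure Rlaw (space Rlaw))"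
    using B by (simp only: UR.emeasure_pair_measure_Times R.emeasure_pair_measure_Times sets.top pair_measureI)
  also have "\<dots> = emeasure Uspace B"
    by (simp only: Z.emeasure_space_1 R.emeasure_space_1 mult_1 mult_1_right)
  also have "\<dots> = emeasure coin {True}"
    unfolding B_def by (rule coins.emeasure_PiM_Collect_single[OF i]) simp
  also have "\<dots> = ennreal (1/2)"
    by (simp add: emeasure_pmf_single)
  finally show ?thesis .
qed

lemma nn_integral_risk:
  assumes i: "i \<in> idx"
  shows "(\<integral>\<^sup>+\<omega>. risk (W \<omega>) \<partial>M) = 2 * (\<integral>\<^sup>+\<omega>. ennreal (of_bool (U i \<omega>) * loss (W \<omega>) (Z i False \<omega>)) \<partial>M)"
proof -
  have "(\<integral>\<^sup>+\<omega>. risk (W \<omega>) \<partial>M) = (\<integral>\<^sup>+\<omega>. risk (learner (coords \<omega>)) \<partial>M)"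
    by (intro nn_integral_cong) (simp add: learner_coords)
  also have "\<dots> = (\<integral>\<^sup>+x. risk (learner x) \<partial>\<Omega>)"
    by (rule nn_integral_coords) measurable
  also have "\<dots> = 2 * (\<integral>\<^sup>+x. (if mask i x then ennreal (loss (learner x) (sample i False x)) else 0) \<partial>\<Omega>)"
    by (rule nn_integral_risk_canonical[OF i])
  also have "(\<integral>\<^sup>+x. (if mask i x then ennreal (loss (learner x) (sample i False x)) else 0) \<partial>\<Omega>)
      = (\<integral>\<^sup>+\<omega>. ennreal (of_bool (U i \<omega>) * loss (W \<omega>) (Z i False \<omega>)) \<partial>M)"
  proof -
    have "(\<integral>\<^sup>+x. (if mask i x then ennreal (loss (learner x) (sample i False x)) else 0) \<partial>\<Omega>)
        = (\<integral>\<^sup>+\<omega>. (if mask i (coords \<omega>) then ennreal (loss (learner (coords \<omega>)) (sample i False (coords \<omega>))) else 0) \<partial>M)"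
      using i by (intro nn_integral_coords[symmetric]) measurable
    also have "\<dots> = (\<integral>\<^sup>+\<omega>. ennreal (of_bool (U i \<omega>) * loss (W \<omega>) (Z i False \<omega>)) \<partial>M)"
      using i by (intro nn_integral_cong) (simp add: learner_coords)
    finally show ?thesis .
  qed
  finally show ?thesis .
qed

lemma nn_integral_train_loss:
  assumes i: "i \<in> idx"
  shows "(\<integral>\<^sup>+\<omega>. ennreal (loss (W \<omega>) (Z i (U i \<omega>) \<omega>)) \<partial>M)
       = 2 * (\<integral>\<^sup>+\<omega>. ennreal (of_bool (\<not> U i \<omega>) * loss (W \<omega>) (Z i False \<omega>)) \<partial>M)"
proof -
  have "(\<integral>\<^sup>+\<omega>. ennreal (loss (W \<omega>) (Z i (U i \<omega>) \<omega>)) \<partial>M)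
      = (\<integral>\<^sup>+\<omega>. ennreal (loss (learner (coords \<omega>)) (sample i (mask i (coords \<omega>)) (coords \<omega>))) \<partial>M)"
    using i by (intro nn_integral_cong) (simp add: learner_coords)
  also have "\<dots> = (\<integral>\<^sup>+x. ennreal (loss (learner x) (sample i (mask i x) x)) \<partial>\<Omega>)"
    using i by (intro nn_integral_coords) measurable
  also have "\<dots> = 2 * (\<integral>\<^sup>+x. (if mask i x then 0 else ennreal (loss (learner x) (sample i False x))) \<partial>\<Omega>)"
    by (rule nn_integral_train_loss_canonical[OF i])
  also have "(\<integral>\<^sup>+x. (if mask i x then 0 else ennreal (loss (learner x) (sample i False x))) \<partial>\<Omega>)
      = (\<integral>\<^sup>+\<omega>. (if mask i (coords \<omega>) then 0 else ennreal (loss (learner (coords \<omega>)) (sample i False (coords \<omega>)))) \<partial>M)"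
    using i by (intro nn_integral_coords[symmetric]) measurable
  also have "\<dots> = (\<integral>\<^sup>+\<omega>. ennreal (of_bool (\<not> U i \<omega>) * loss (W \<omega>) (Z i False \<omega>)) \<partial>M)"
    using i by (intro nn_integral_cong) (simp add: learner_coords)
  finally show ?thesis .
qed

lemma integral_risk:
  assumes i: "i \<in> idx" and int: "integrable M (\<lambda>\<omega>. loss (W \<omega>) (Z i False \<omega>))"
  shows "(\<integral>\<omega>. (\<integral>z. loss (W \<omega>) z \<partial>\<mu>) \<partial>M) = 2 * (\<integral>\<omega>. of_bool (U i \<omega>) * loss (W \<omega>) (Z i False \<omega>) \<partial>M)"
proof -
  have [measurable]: "U i \<in> M \<rightarrow>\<^sub>M count_space UNIV" "Z i False \<in> M \<rightarrow>\<^sub>M \<mu>"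
    by (rule U_meas[OF i], rule Z_meas[OF i])
  have int_U: "integrable M (\<lambda>\<omega>. of_bool (U i \<omega>) * loss (W \<omega>) (Z i False \<omega>))"
  proof (rule Bochner_Integration.integrable_bound[OF int])
    show "(\<lambda>\<omega>. of_bool (U i \<omega>) * loss (W \<omega>) (Z i False \<omega>)) \<in> borel_measurable M" by measurable
  qed (auto intro!: AE_I2 simp: loss_nonneg)
  then have "(\<integral>\<^sup>+\<omega>. ennreal (of_bool (U i \<omega>) * loss (W \<omega>) (Z i False \<omega>)) \<partial>M)
      = ennreal (\<integral>\<omega>. of_bool (U i \<omega>) * loss (W \<omega>) (Z i False \<omega>) \<partial>M)"
    by (rule nn_integral_eq_integral) (simp add: loss_nonneg)
  then have "(\<integral>\<^sup>+\<omega>. risk (W \<omega>) \<partial>M) \<noteq> \<infinity>"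
    by (simp add: nn_integral_risk[OF i] ennreal_mult_eq_top_iff)
  then have "AE \<omega> in M. risk (W \<omega>) \<noteq> \<infinity>" by (intro nn_integral_PInf_AE) measurable
  then have "AE \<omega> in M. ennreal (\<integral>z. loss (W \<omega>) z \<partial>\<mu>) = risk (W \<omega>)"
  proof (rule AE_mp, intro AE_I2 impI)
    fix \<omega> assume \<omega>: "\<omega> \<in> space M" and finite: "risk (W \<omega>) \<noteq> \<infinity>"
    from \<omega> have "W \<omega> \<in> space Wsp" by (rule measurable_space[OF measurable_W])
    then have [measurable]: "loss (W \<omega>) \<in> borel_measurable \<mu>"
      using measurable_compose[OF measurable_Pair1' loss_meas] by (simp add: comp_def)
    have "integrable \<mu> (loss (W \<omega>))"
      using finite loss_nonneg by (intro integrableI_nonneg) (auto simp: risk_def less_top)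
    then show "ennreal (\<integral>z. loss (W \<omega>) z \<partial>\<mu>) = risk (W \<omega>)"
      unfolding risk_def using loss_nonneg by (intro nn_integral_eq_integral[symmetric]) auto
  qed
  then have "(\<integral>\<^sup>+\<omega>. ennreal (\<integral>z. loss (W \<omega>) z \<partial>\<mu>) \<partial>M) = (\<integral>\<^sup>+\<omega>. risk (W \<omega>) \<partial>M)"
    by (rule nn_integral_cong_AE)
  also have "\<dots> = 2 * (\<integral>\<^sup>+\<omega>. ennreal (of_bool (U i \<omega>) * loss (W \<omega>) (Z i False \<omega>)) \<partial>M)"
    by (rule nn_integral_risk[OF i])
  finally have nn_eq: "(\<integral>\<^sup>+\<omega>. ennreal (\<integral>z. loss (W \<omega>) z \<partial>\<mu>) \<partial>M)
      = 2 * (\<integral>\<^sup>+\<omega>. ennreal (of_bool (U i \<omega>) * loss (W \<omega>) (Z i False \<omega>)) \<partial>M)" .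
  interpret \<mu>: prob_space \<mu> by (rule mu)
  have "(\<lambda>\<omega>. \<integral>z. loss (W \<omega>) z \<partial>\<mu>) \<in> borel_measurable M" by measurable
  from integral_eq_twice_of_nn_integral_eq(2)[OF this _ _ _ int_U nn_eq] show ?thesis
    by (auto simp: loss_nonneg)
qed

lemma integral_train_loss:
  assumes i: "i \<in> idx" and int: "integrable M (\<lambda>\<omega>. loss (W \<omega>) (Z i False \<omega>))"
  shows "integrable M (\<lambda>\<omega>. loss (W \<omega>) (Z i (U i \<omega>) \<omega>))"
    and "(\<integral>\<omega>. loss (W \<omega>) (Z i (U i \<omega>) \<omega>) \<partial>M) = 2 * (\<integral>\<omega>. of_bool (\<not> U i \<omega>) * loss (W \<omega>) (Z i False \<omega>) \<partial>M)"
proof -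
  have [measurable]: "U i \<in> M \<rightarrow>\<^sub>M count_space UNIV" "Z i False \<in> M \<rightarrow>\<^sub>M \<mu>"
    by (rule U_meas[OF i], rule Z_meas[OF i])
  have [measurable]: "(\<lambda>\<omega>. Z i (U i \<omega>) \<omega>) \<in> M \<rightarrow>\<^sub>M \<mu>"
    using i measurable_compose[OF measurable_coords measurable_selected_sample[OF i]]
    by (simp add: comp_def)
  have "integrable M (\<lambda>\<omega>. of_bool (\<not> U i \<omega>) * loss (W \<omega>) (Z i False \<omega>))"
  proof (rule Bochner_Integration.integrable_bound[OF int])
    show "(\<lambda>\<omega>. of_bool (\<not> U i \<omega>) * loss (W \<omega>) (Z i False \<omega>)) \<in> borel_measurable M" by measurable
  qed (auto intro!: AE_I2 simp: loss_nonneg)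
  from integral_eq_twice_of_nn_integral_eq[OF _ _ _ _ this nn_integral_train_loss[OF i]]
  show "integrable M (\<lambda>\<omega>. loss (W \<omega>) (Z i (U i \<omega>) \<omega>))"
    and "(\<integral>\<omega>. loss (W \<omega>) (Z i (U i \<omega>) \<omega>) \<partial>M) = 2 * (\<integral>\<omega>. of_bool (\<not> U i \<omega>) * loss (W \<omega>) (Z i False \<omega>) \<partial>M)"
    by (auto simp: loss_nonneg)
qed

lemma generalization_error_eq:
  assumes int: "\<And>i. i \<in> idx \<Longrightarrow> integrable M (\<lambda>\<omega>. (if U i \<omega> then 1 else -1) * loss (W \<omega>) (Z i False \<omega>))"
  shows "(\<integral>\<omega>. (\<integral>z. loss (W \<omega>) z \<partial>\<mu>) \<partial>M) - (\<integral>\<omega>. (1 / real n) * (\<Sum>i\<in>idx. loss (W \<omega>) (Z i (U i \<omega>) \<omega>)) \<partial>M)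
       = (2 / real n) * (\<Sum>i\<in>idx. \<integral>\<omega>. (if U i \<omega> then 1 else -1) * loss (W \<omega>) (Z i False \<omega>) \<partial>M)"
proof -
  define L where "L i \<omega> = loss (W \<omega>) (Z i False \<omega>)" for i \<omega>
  define A where "A i = (\<integral>\<omega>. of_bool (U i \<omega>) * L i \<omega> \<partial>M)" for i
  define B where "B i = (\<integral>\<omega>. of_bool (\<not> U i \<omega>) * L i \<omega> \<partial>M)" for i
  have int_L: "integrable M (L i)" if i: "i \<in> idx" for i
  proof (rule Bochner_Integration.integrable_bound[OF int[OF i]])
    show "L i \<in> borel_measurable M" using i unfolding L_def by (intro measurable_loss Z_meas) simp_all
  qed (auto intro!: AE_I2 simp: L_def)
  have sign: "(\<integral>\<omega>. (if U i \<omega> then 1 else -1) * L i \<omega> \<partial>M) = A i - B i" if i: "i \<in> idx" for i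
  proof -
    have [measurable]: "U i \<in> M \<rightarrow>\<^sub>M count_space UNIV" "L i \<in> borel_measurable M"
      using i int_L by (auto intro: U_meas)
    have int_part: "integrable M (\<lambda>\<omega>. of_bool (b \<longleftrightarrow> U i \<omega>) * L i \<omega>)" for b
      by (rule Bochner_Integration.integrable_bound[OF int_L[OF i]]) (auto intro!: AE_I2)
    have "(\<integral>\<omega>. of_bool (U i \<omega>) * L i \<omega> - of_bool (\<not> U i \<omega>) * L i \<omega> \<partial>M) = A i - B i"
      unfolding A_def B_def using int_part[of True] int_part[of False]
      by (intro Bochner_Integration.integral_diff) simp_all
    moreover have "(\<integral>\<omega>. (if U i \<omega> then 1 else -1) * L i \<omega> \<partial>M)
        = (\<integral>\<omega>. of_bool (U i \<omega>) * L i \<omega> - of_bool (\<not> U i \<omega>) * L i \<omega> \<partial>M)"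
      by (intro Bochner_Integration.integral_cong) auto
    ultimately show ?thesis by simp
  qed
  have "(\<Sum>i\<in>idx. 2 * A i) = (\<Sum>i\<in>idx. (\<integral>\<omega>. (\<integral>z. loss (W \<omega>) z \<partial>\<mu>) \<partial>M))"
    using integral_risk int_L unfolding A_def L_def by (intro sum.cong) simp_all
  then have "real n * (\<integral>\<omega>. (\<integral>z. loss (W \<omega>) z \<partial>\<mu>) \<partial>M) = (\<Sum>i\<in>idx. 2 * A i)" by simp
  moreover have "(\<integral>\<omega>. (\<Sum>i\<in>idx. loss (W \<omega>) (Z i (U i \<omega>) \<omega>)) \<partial>M) = (\<Sum>i\<in>idx. 2 * B i)"
    using integral_train_loss int_L unfolding B_def L_def by (simp add: integral_sum)
  then have "real n * (\<integral>\<omega>. (1 / real n) * (\<Sum>i\<in>idx. loss (W \<omega>) (Z i (U i \<omega>) \<omega>)) \<partial>M) = (\<Sum>i\<in>idx. 2 * B i)"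
    using n by simp
  moreover have "(\<Sum>i\<in>idx. \<integral>\<omega>. (if U i \<omega> then 1 else -1) * L i \<omega> \<partial>M) = (\<Sum>i\<in>idx. A i - B i)"
    using sign by (intro sum.cong) simp_all
  ultimately show ?thesis
    using n unfolding L_def[symmetric]
    by (simp add: sum_subtractf sum_distrib_left[symmetric] sum_distrib_right[symmetric] field_simps)
qed

end

theorem theorem11:
  fixes M :: "'a measure"
    and \<mu> :: "'z measure"
    and Wsp :: "'w measure"
    and Rsp :: "'r measure"
    and n k0 :: nat
    and Z :: "nat \<Rightarrow> bool \<Rightarrow> 'a \<Rightarrow> 'z"
    and U :: "nat \<Rightarrow> 'a \<Rightarrow> bool"
    and R :: "'a \<Rightarrow> 'r"
    and \<A> :: "(nat \<Rightarrow> 'z) \<Rightarrow> 'r \<Rightarrow> 'w"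
    and W :: "'a \<Rightarrow> 'w"
    and loss :: "'w \<Rightarrow> 'z \<Rightarrow> real"
    and Lc :: "nat \<Rightarrow> nat \<Rightarrow> 'a \<Rightarrow> real"
  assumes M: "prob_space M"
    and mu: "prob_space \<mu>"
    and n: "n \<ge> 1"
    and loss_nonneg: "\<And>w z. loss w z \<ge> 0"
    and loss_meas: "(\<lambda>(w, z). loss w z) \<in> Wsp \<Otimes>\<^sub>M \<mu> \<rightarrow>\<^sub>M borel"
    and A_meas: "(\<lambda>(s, r). \<A> s r) \<in> (\<Pi>\<^sub>M i\<in>{1..n}. \<mu>) \<Otimes>\<^sub>M Rsp \<rightarrow>\<^sub>M Wsp"
    and Z_meas: "\<And>i j. i \<in> {1..n} \<Longrightarrow> Z i j \<in> M \<rightarrow>\<^sub>M \<mu>"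
    and U_meas: "\<And>i. i \<in> {1..n} \<Longrightarrow> U i \<in> M \<rightarrow>\<^sub>M count_space UNIV"
    and R_meas: "R \<in> M \<rightarrow>\<^sub>M Rsp"
    and joint_law:
      "distr M ((\<Pi>\<^sub>M p\<in>{1..n} \<times> UNIV. \<mu>) \<Otimes>\<^sub>M (\<Pi>\<^sub>M i\<in>{1..n}. measure_pmf (pmf_of_set UNIV)) \<Otimes>\<^sub>M Rsp)
         (\<lambda>\<omega>. (restrict (\<lambda>p. Z (fst p) (snd p) \<omega>) ({1..n} \<times> UNIV),
                restrict (\<lambda>i. U i \<omega>) {1..n}, R \<omega>))
       = (\<Pi>\<^sub>M p\<in>{1..n} \<times> UNIV. \<mu>) \<Otimes>\<^sub>M (\<Pi>\<^sub>M i\<in>{1..n}. measure_pmf (pmf_of_set UNIV))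
           \<Otimes>\<^sub>M distr M Rsp R"
    and W_def: "\<And>\<omega>. \<omega> \<in> space M \<Longrightarrow>
                  W \<omega> = \<A> (restrict (\<lambda>i. Z i (U i \<omega>) \<omega>) {1..n}) (R \<omega>)"
    and chain: "\<And>i. i \<in> {1..n} \<Longrightarrow>
       stochastic_chain M (restrict_space borel {0..})
         (\<lambda>l \<omega>. (if U i \<omega> then 1 else -1) * l)
         (\<lambda>\<omega>. loss (W \<omega>) (Z i False \<omega>)) (Lc i) k0"
  shows "ereal ((\<integral>\<omega>. (\<integral>z. loss (W \<omega>) z \<partial>\<mu>) \<partial>M)
                - (\<integral>\<omega>. (1 / real n) * (\<Sum>i\<in>{1..n}. loss (W \<omega>) (Z i (U i \<omega>) \<omega>)) \<partial>M))
         \<le> enn2ereal (ennreal (2 / real n) *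
              (\<Sum>i\<in>{1..n}. \<Sum>k. ennsqrt (2 * (\<integral>\<^sup>+ \<omega>. ennreal ((Lc i (k0 + k + 1) \<omega> - Lc i (k0 + k) \<omega>)\<^sup>2) \<partial>M)
                  * ennreal (prob_space.mutual_information M (exp 1)
                       (restrict_space borel {0..}) (count_space UNIV) (Lc i (k0 + k + 1)) (U i)))))"
proof -
  interpret supersample M \<mu> Wsp Rsp n Z U R \<A> W loss
    by (rule supersample.intro) fact+
  interpret prob_space M by (rule M)
  let ?\<epsilon>L = "\<lambda>i. \<integral>\<omega>. (if U i \<omega> then 1 else -1) * loss (W \<omega>) (Z i False \<omega>) \<partial>M"
  let ?b = "\<lambda>i. \<Sum>k. ennsqrt (2 * (\<integral>\<^sup>+ \<omega>. ennreal ((Lc i (k0 + k + 1) \<omega> - Lc i (k0 + k) \<omega>)\<^sup>2) \<partial>M)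
                  * ennreal (mutual_information (exp 1) nonneg_reals (count_space UNIV) (Lc i (k0 + k + 1)) (U i)))"
  have int: "integrable M (\<lambda>\<omega>. (if U i \<omega> then 1 else -1) * loss (W \<omega>) (Z i False \<omega>))"
    if "i \<in> {1..n}" for i
    using chain[OF that] by (simp add: stochastic_chain_def)
  have bound: "ereal (?\<epsilon>L i) \<le> enn2ereal (?b i)" if "i \<in> {1..n}" for i
    by (rule stochastic_chain_sign_bound[OF U_meas[OF that] prob_mask[OF that] chain[OF that]])
  have "ereal ((\<integral>\<omega>. (\<integral>z. loss (W \<omega>) z \<partial>\<mu>) \<partial>M)
                - (\<integral>\<omega>. (1 / real n) * (\<Sum>i\<in>{1..n}. loss (W \<omega>) (Z i (U i \<omega>) \<omega>)) \<partial>M))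
      = ereal (2 / real n * (\<Sum>i\<in>{1..n}. ?\<epsilon>L i))"
    using generalization_error_eq[OF int] by (rule arg_cong)
  also have "\<dots> = ereal (2 / real n) * (\<Sum>i\<in>{1..n}. ereal (?\<epsilon>L i))"
    by (simp only: times_ereal.simps(1) sum_ereal)
  also have "\<dots> \<le> ereal (2 / real n) * (\<Sum>i\<in>{1..n}. enn2ereal (?b i))"
    using bound by (intro ereal_mult_left_mono sum_mono) auto
  also have "\<dots> = enn2ereal (ennreal (2 / real n) * (\<Sum>i\<in>{1..n}. ?b i))"
    by (simp add: times_ennreal.rep_eq)
  finally show ?thesis .
qed

end
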